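(* Consider Problem (P) under Assumption (A) over a sequence of directed graphs satisfying Assumption (B'), and run SONATA for time-varying digraphs with weight matrices satisfying (E) and surrogates satisfying (C), where $\tilde\mu_{\min}\ge D^\ell_{\min}$. Then there exists $\bar\alpha\in(0,1]$ such that for every step-size $\alpha\in(0,\bar\alpha)$ and every $i\in\{1,\dots,m\}$, $\{U(x_i^\nu)\}$ converges to $U^\star$ at an R-linear rate, i.e. $|U(x_i^\nu)-U^\star|=O(z^\nu)$ for some $z\in(0,1)$.
   Context: Problem (P): minimize $U(x)=F(x)+G(x)$ over $x\in\mathcal K$, $F=\frac1m\sum_{i=1}^mf_i$. (A): $\mathcal K\subseteq\mathbb R^d$ nonempty closed convex; each $f_i$ twice differentiable and convex on an open $\mathcal O\supseteq\mathcal K$; $\mu I\preceq\nabla^2F\preceq LI$ on $\mathcal K$ ($\mu>0$, $L<\infty$); $G:\mathcal K\to\mathbb R$ convex; $U^\star$ optimal value. (B'): time-varying digraphs $\mathcal G^\nu=(\{1,\dots,m\},\mathcal E^\nu)$, $(i,j)\in\mathcal E^\nu$ meaning a link from $i$ to $j$; there is an integer $B>0$ such that the graph with edge set $\bigcup_{t=\nu B}^{(\nu+1)B-1}\mathcal E^t$ is strongly connected for all $\nu\ge0$. (E): there is $c_\ell>0$ such that for all $\nu$: $c^\nu_{ii}\ge c_\ell$; $c^\nu_{ij}\ge c_\ell$ if $(j,i)\in\mathcal E^\nu$ and $c^\nu_{ij}=0$ otherwise; $\mathbf1^\top C^\nu=\mathbf1^\top$. (C): $\tilde f_i:\mathcal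 O\times\mathcal O\to\mathbb R$ is $C^2$, $\nabla\tilde f_i(x;x)=\nabla f_i(x)$, $\nabla\tilde f_i(\cdot;x)$ $\tilde L_i$-Lipschitz and $\tilde f_i(\cdot;x)$ $\tilde\mu_i$-strongly convex on $\mathcal K$ for all $x\in\mathcal K$ (derivatives in first argument). Constants $D_i^\ell\le D_i^u$ with $D_i^\ell I\preceq\nabla^2\tilde f_i(x;y)-\nabla^2F(x)\preceq D_i^uI$ on $\mathcal K\times\mathcal K$; $\tilde\mu_{\min}=\min_i\tilde\mu_i$, $D^\ell_{\min}=\min_iD_i^\ell$. SONATA for time-varying digraphs (step-size $\alpha\in(0,1]$): $x_i^0\in\mathcal K$, $y_i^0=\nabla f_i(x_i^0)$, $\phi_i^0=1$; $\hat x_i^\nu=\arg\min_{x_i\in\mathcal K}\tilde f_i(x_i;x_i^\nu)+(y_i^\nu-\nabla f_i(x_i^\nu))^\top(x_i-x_i^\nu)+G(x_i)$; $x_i^{\nu+1/2}=x_i^\nu+\alpha(\hat x_i^\nu-x_i^\nu)$; $\phi_i^{\nu+1}=\sum_jc^\nu_{ij}\phi_j^\nu$; $x_i^{\nu+1}=\frac1{\phi_i^{\nu+1}}\sum_jc^\nu_{ij}\phi_j^\nu x_j^{\nu+1/2}$; $y_i^{\nu+1}=\frac1{\phi_i^{\nu+1}}\sum_jc^\nu_{ij}\big(\phi_j^\nu y_j^\nu+\nabla f_j(x_j^{\nu+1})-\nabla f_j(x_j^\nu)\big)$. *)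

theory Defs
  imports "HOL-Analysis.Analysis"
begin

definition strongly_convex_on :: "real \<Rightarrow> 'a::real_inner set \<Rightarrow> ('a \<Rightarrow> real) \<Rightarrow> bool" where
  "strongly_convex_on mu S f \<longleftrightarrow> convex_on S (\<lambda>x. f x - mu / 2 * (norm x)\<^sup>2)"

definition C2_on :: "'a::euclidean_space set \<Rightarrow> ('a \<Rightarrow> real) \<Rightarrow> bool" where
  "C2_on S f \<longleftrightarrow> (\<exists>D1 :: 'a \<Rightarrow> ('a \<Rightarrow>\<^sub>L real). \<exists>D2 :: 'a \<Rightarrow> ('a \<Rightarrow>\<^sub>L ('a \<Rightarrow>\<^sub>L real)).
      (\<forall>x\<in>S. (f has_derivative blinfun_apply (D1 x)) (at x)) \<and>
      (\<forall>x\<in>S. (D1 has_derivative blinfun_apply (D2 x)) (at x)) \<and>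
      continuous_on S D2)"

text \<open>A digraph on vertex set V with edge set E (pairs (i,j) = link i to j) is strongly connected.\<close>
definition strongly_connected_digraph :: "'v set \<Rightarrow> ('v \<times> 'v) set \<Rightarrow> bool" where
  "strongly_connected_digraph V E \<longleftrightarrow> (\<forall>i\<in>V. \<forall>j\<in>V. (i, j) \<in> (E \<inter> (V \<times> V))\<^sup>*)"

definition R_linear_conv :: "(nat \<Rightarrow> real) \<Rightarrow> real \<Rightarrow> bool" where
  "R_linear_conv u l \<longleftrightarrow> (\<exists>z. 0 < z \<and> z < 1 \<and> (\<exists>K. \<forall>\<nu>. \<bar>u \<nu> - l\<bar> \<le> K * z ^ \<nu>))"

end

theory Submission
  imports Defs
begin

text \<open>
  Reweighting the column-stochastic matrices \<open>c k\<close> by the push-sum weights, \<open>W k i j =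
  c k i j * phi j k / phi i (k + 1)\<close>, gives row-stochastic matrices, so the \<open>x\<close>- and \<open>y\<close>-updates
  of SONATA are averages of perturbed local values. By the joint strong connectivity, products of
  \<open>W\<close> over \<open>T = m B\<close> consecutive steps have all entries at least \<open>delta > 0\<close>; hence the
  disagreements \<open>xdiam\<close> and \<open>ydiam\<close> of the \<open>x\<close>- and \<open>y\<close>-iterates contract by
  \<open>rho = 1 - m delta\<close> per window, up to perturbations of the size of the local steps \<open>dmax\<close>.
  Gradient tracking keeps \<open>\<Sum>i. phi i k y i k = \<Sum>i. gf i (x i k)\<close>, so the tracking errors are
  bounded by \<open>ydiam + Lf xdiam\<close>. Optimality of the surrogate subproblems then yields the descent
  inequality
    \<open>lyap (k + 1) \<le> (1 - alpha tau) lyap k - alpha k_desc dmax\<^sup>2 + alpha k_err (xdiam\<^sup>2 + ydiam\<^sup>2)\<close>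
  for the Lyapunov function \<open>lyap k = \<Sum>i. phi i k / m * (U (x i k) - Ustar)\<close>. For small \<open>alpha\<close> a
  small-gain induction shows that \<open>xdiam\<close>, \<open>ydiam\<close>, \<open>dmax\<close> and \<open>sqrt lyap\<close> all decay like
  \<open>(1 - alpha tau / 4)\<^sup>\<nu>\<close>, and \<open>phi i k \<ge> eta > 0\<close> transfers the decay of \<open>lyap\<close> to every
  \<open>U (x i \<nu>) - Ustar\<close>.

  Of the surrogate curvature bounds only \<open>D\<^sup>u\<close> enters this argument.
\<close>

section \<open>Differentiable convex functions\<close>

lemma has_real_derivative_on_line:
  fixes f :: "'a::real_inner \<Rightarrow> real"
  assumes "(f has_derivative (\<lambda>v. gr \<bullet> v)) (at (p + t *\<^sub>R h))"
  shows "((\<lambda>s. f (p + s *\<^sub>R h)) has_real_derivative (gr \<bullet> h)) (at t)"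
proof -
  have l: "((\<lambda>s. p + s *\<^sub>R h) has_derivative (\<lambda>s. s *\<^sub>R h)) (at t)"
    by (auto intro!: derivative_eq_intros)
  have "((\<lambda>s. f (p + s *\<^sub>R h)) has_derivative (\<lambda>s. gr \<bullet> (s *\<^sub>R h))) (at t)"
    using has_derivative_compose[OF l assms] by simp
  moreover have "(\<lambda>s. gr \<bullet> (s *\<^sub>R h)) = (*) (gr \<bullet> h)" by (auto simp: mult.commute)
  ultimately show ?thesis by (simp add: has_field_derivative_def)
qed

lemma has_real_derivative_on_line_inner:
  fixes g :: "'a::real_inner \<Rightarrow> 'a"
  assumes "(g has_derivative H) (at (p + t *\<^sub>R h))"
  shows "((\<lambda>s. g (p + s *\<^sub>R h) \<bullet> k) has_real_derivative (H h \<bullet> k)) (at t)"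
proof -
  have l: "((\<lambda>s. p + s *\<^sub>R h) has_derivative (\<lambda>s. s *\<^sub>R h)) (at t)"
    by (auto intro!: derivative_eq_intros)
  have c: "((\<lambda>s. g (p + s *\<^sub>R h)) has_derivative (\<lambda>s. H (s *\<^sub>R h))) (at t)"
    using has_derivative_compose[OF l assms] by simp
  have lin: "linear H" using assms has_derivative_linear by blast
  have "((\<lambda>s. g (p + s *\<^sub>R h) \<bullet> k) has_derivative (\<lambda>s. H (s *\<^sub>R h) \<bullet> k)) (at t)"
    using has_derivative_inner_left[OF c] by simp
  moreover have "(\<lambda>s. H (s *\<^sub>R h) \<bullet> k) = (*) (H h \<bullet> k)"
    using lin by (auto simp: linear_scale mult.commute)
  ultimately show ?thesis by (simp add: has_field_derivative_def)
qed

lemma quadratic_upper_bound: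
  fixes \<phi> :: "'a::real_inner \<Rightarrow> real"
  assumes K: "convex K"
    and d1: "\<And>x. x \<in> K \<Longrightarrow> (\<phi> has_derivative (\<lambda>v. g x \<bullet> v)) (at x)"
    and d2: "\<And>x. x \<in> K \<Longrightarrow> (g has_derivative H x) (at x)"
    and hb: "\<And>x h. x \<in> K \<Longrightarrow> H x h \<bullet> h \<le> M * (norm h)\<^sup>2"
    and a: "a \<in> K" and b: "b \<in> K"
  shows "\<phi> b \<le> \<phi> a + g a \<bullet> (b - a) + M / 2 * (norm (b - a))\<^sup>2"
proof -
  define d where "d = b - a"
  have inK: "a + s *\<^sub>R d \<in> K" if "0 \<le> s" "s \<le> 1" for s
  proof -
    have "a + s *\<^sub>R d = (1 - s) *\<^sub>R a + s *\<^sub>R b" by (simp add: d_def algebra_simps)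
    thus ?thesis using K a b that by (simp add: convex_def)
  qed
  define r where "r = (\<lambda>s. g (a + s *\<^sub>R d) \<bullet> d - g a \<bullet> d - M * s * (norm d)\<^sup>2)"
  have r_der: "(r has_real_derivative (H (a + s *\<^sub>R d) d \<bullet> d - M * (norm d)\<^sup>2)) (at s)"
    if "0 \<le> s" "s \<le> 1" for s
  proof -
    have "((\<lambda>s. g (a + s *\<^sub>R d) \<bullet> d) has_real_derivative (H (a + s *\<^sub>R d) d \<bullet> d)) (at s)"
      by (rule has_real_derivative_on_line_inner) (use d2 inK that in auto)
    then show ?thesis unfolding r_def
      by (auto intro!: derivative_eq_intros)
  qed
  have r_le: "r s \<le> 0" if "0 \<le> s" "s \<le> 1" for s
  proof -
    have "r s \<le> r 0"
      by (rule DERIV_nonpos_imp_nonincreasing[of 0 s r]) (use that r_der hb inK in force)+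
    also have "r 0 = 0" by (simp add: r_def)
    finally show ?thesis .
  qed
  define w where "w = (\<lambda>s. \<phi> (a + s *\<^sub>R d) - \<phi> a - (g a \<bullet> d) * s - M / 2 * s\<^sup>2 * (norm d)\<^sup>2)"
  have w_der: "(w has_real_derivative r s) (at s)" if "0 \<le> s" "s \<le> 1" for s
  proof -
    have "((\<lambda>s. \<phi> (a + s *\<^sub>R d)) has_real_derivative (g (a + s *\<^sub>R d) \<bullet> d)) (at s)"
      by (rule has_real_derivative_on_line) (use d1 inK that in auto)
    then have "(w has_real_derivative (g (a + s *\<^sub>R d) \<bullet> d - g a \<bullet> d - M / 2 * (2 * s) * (norm d)\<^sup>2)) (at s)"
      unfolding w_def by (auto intro!: derivative_eq_intros)
    then show ?thesis by (simp add: r_def)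
  qed
  have "w 1 \<le> w 0"
    by (rule DERIV_nonpos_imp_nonincreasing[of 0 1 w]) (use w_der r_le in force)+
  then show ?thesis by (simp add: w_def d_def inner_commute)
qed

lemma quadratic_lower_bound:
  fixes \<phi> :: "'a::real_inner \<Rightarrow> real"
  assumes K: "convex K"
    and d1: "\<And>x. x \<in> K \<Longrightarrow> (\<phi> has_derivative (\<lambda>v. g x \<bullet> v)) (at x)"
    and d2: "\<And>x. x \<in> K \<Longrightarrow> (g has_derivative H x) (at x)"
    and hb: "\<And>x h. x \<in> K \<Longrightarrow> M * (norm h)\<^sup>2 \<le> H x h \<bullet> h"
    and a: "a \<in> K" and b: "b \<in> K"
  shows "\<phi> a + g a \<bullet> (b - a) + M / 2 * (norm (b - a))\<^sup>2 \<le> \<phi> b"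
proof -
  have "(- \<phi>) b \<le> (- \<phi>) a + (- g a) \<bullet> (b - a) + (- M) / 2 * (norm (b - a))\<^sup>2"
  proof (rule quadratic_upper_bound[where g = "\<lambda>x. - g x" and H = "\<lambda>x h. - H x h" and K = K])
    fix x assume x: "x \<in> K"
    show "((- \<phi>) has_derivative (\<lambda>v. - g x \<bullet> v)) (at x)"
      using has_derivative_minus[OF d1[OF x]] by (simp add: fun_Compl_def)
    show "((\<lambda>x. - g x) has_derivative (\<lambda>h. - H x h)) (at x)"
      using has_derivative_minus[OF d2[OF x]] by simp
    fix h show "- H x h \<bullet> h \<le> - M * (norm h)\<^sup>2" using hb[OF x, of h] by simp
  qed (use K a b in auto)
  then show ?thesis by simp
qed

lemma convex_on_gradient_ineq:
  fixes q :: "'a::real_inner \<Rightarrow> real"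
  assumes cv: "convex_on S q"
    and d: "\<And>x. x \<in> S \<Longrightarrow> (q has_derivative (\<lambda>v. gq x \<bullet> v)) (at x)"
    and a: "a \<in> S" and b: "b \<in> S"
  shows "q a + gq a \<bullet> (b - a) \<le> q b"
proof (rule ccontr)
  assume "\<not> ?thesis"
  then have lt: "q b - q a < gq a \<bullet> (b - a)" by simp
  define c where "c = q b - q a"
  define p where "p = (\<lambda>s. q (a + s *\<^sub>R (b - a)) - c * s)"
  have "((\<lambda>s. q (a + s *\<^sub>R (b - a))) has_real_derivative (gq a \<bullet> (b - a))) (at 0)"
    by (rule has_real_derivative_on_line) (use d a in simp)
  then have "(p has_real_derivative (gq a \<bullet> (b - a) - c)) (at 0)"
    unfolding p_def by (auto intro!: derivative_eq_intros)
  moreover have "0 < gq a \<bullet> (b - a) - c" using lt c_def by simp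
  ultimately obtain e where e: "e > 0" "\<And>h. h > 0 \<Longrightarrow> h < e \<Longrightarrow> p 0 < p (0 + h)"
    using DERIV_pos_inc_right by blast
  define h where "h = min (e / 2) 1"
  have h: "h > 0" "h < e" "h \<le> 1" using e by (auto simp: h_def)
  have "q (a + h *\<^sub>R (b - a)) = q ((1 - h) *\<^sub>R a + h *\<^sub>R b)" by (simp add: algebra_simps)
  also have "\<dots> \<le> (1 - h) * q a + h * q b" using convex_onD[OF cv, of h a b] h a b by simp
  finally have "q (a + h *\<^sub>R (b - a)) \<le> (1 - h) * q a + h * q b" .
  then have "p h \<le> p 0" unfolding p_def c_def by (simp add: algebra_simps)
  with e(2)[OF h(1) h(2)] show False by simp
qed

lemma linearization_diff_inner_le:
  fixes g :: "'a::real_inner \<Rightarrow> 'a"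
  assumes lin: "linear H"
    and R: "\<And>y. norm (y - x) < \<delta> \<Longrightarrow> norm (g y - g x - H (y - x)) \<le> \<epsilon> * norm (y - x)"
    and u: "norm (u - x) < \<delta>" and v: "norm (v - x) < \<delta>"
  shows "\<bar>(g u - g v) \<bullet> h - H (u - v) \<bullet> h\<bar> \<le> \<epsilon> * (norm (u - x) + norm (v - x)) * norm h"
proof -
  have "(g u - g v) - H (u - v) = (g u - g x - H (u - x)) - (g v - g x - H (v - x))"
    using lin by (simp add: linear_diff algebra_simps)
  then have "norm ((g u - g v) - H (u - v)) \<le> norm (g u - g x - H (u - x)) + norm (g v - g x - H (v - x))"
    by (simp only: norm_triangle_ineq4)
  also have "\<dots> \<le> \<epsilon> * (norm (u - x) + norm (v - x))"
    using R[OF u] R[OF v] by (simp add: distrib_left)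
  finally have "norm ((g u - g v) - H (u - v)) \<le> \<epsilon> * (norm (u - x) + norm (v - x))" .
  then have "norm ((g u - g v) - H (u - v)) * norm h \<le> \<epsilon> * (norm (u - x) + norm (v - x)) * norm h"
    by (rule mult_right_mono) simp
  moreover have "\<bar>(g u - g v) \<bullet> h - H (u - v) \<bullet> h\<bar> \<le> norm ((g u - g v) - H (u - v)) * norm h"
    using Cauchy_Schwarz_ineq2[of "(g u - g v) - H (u - v)" h] by (simp add: inner_diff_left)
  ultimately show ?thesis by linarith
qed

lemma second_difference_mean_value:
  fixes f :: "'a::real_inner \<Rightarrow> real"
  assumes d1: "\<And>y. y \<in> S \<Longrightarrow> (f has_derivative (\<lambda>v. g y \<bullet> v)) (at y)"
    and seg: "\<And>t. 0 \<le> t \<Longrightarrow> t \<le> s \<Longrightarrow> x + s *\<^sub>R k + t *\<^sub>R h \<in> S \<and> x + t *\<^sub>R h \<in> S"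
    and s: "0 < s"
  obtains \<tau> where "0 < \<tau>" "\<tau> < s"
    "f (x + s *\<^sub>R k + s *\<^sub>R h) - f (x + s *\<^sub>R h) - f (x + s *\<^sub>R k) + f x
      = s * ((g (x + s *\<^sub>R k + \<tau> *\<^sub>R h) - g (x + \<tau> *\<^sub>R h)) \<bullet> h)"
proof -
  define \<phi> where "\<phi> t = f (x + s *\<^sub>R k + t *\<^sub>R h) - f (x + t *\<^sub>R h)" for t
  define \<phi>' where "\<phi>' t = (g (x + s *\<^sub>R k + t *\<^sub>R h) - g (x + t *\<^sub>R h)) \<bullet> h" for t
  have "(\<phi> has_real_derivative \<phi>' t) (at t)" if "0 \<le> t" "t \<le> s" for t
    using seg[OF that] unfolding \<phi>_def \<phi>'_def inner_diff_left
    by (intro DERIV_diff has_real_derivative_on_line d1) auto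
  then obtain \<tau> where "0 < \<tau>" "\<tau> < s" "\<phi> s - \<phi> 0 = s * \<phi>' \<tau>"
    using MVT2[of 0 s \<phi> \<phi>'] s by auto
  then show ?thesis using that by (simp add: \<phi>_def \<phi>'_def algebra_simps)
qed

lemma second_difference_approx:
  fixes f :: "'a::real_inner \<Rightarrow> real"
  assumes ball: "\<And>y. norm (y - x) < r \<Longrightarrow> y \<in> S"
    and d1: "\<And>y. y \<in> S \<Longrightarrow> (f has_derivative (\<lambda>v. g y \<bullet> v)) (at y)"
    and lin: "linear H"
    and R: "\<And>y. norm (y - x) < \<delta> \<Longrightarrow> norm (g y - g x - H (y - x)) \<le> \<epsilon> * norm (y - x)"
    and \<epsilon>: "0 \<le> \<epsilon>"
    and s: "0 < s" "s * (norm h + norm k) < min r \<delta>"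
  shows "\<bar>f (x + s *\<^sub>R k + s *\<^sub>R h) - f (x + s *\<^sub>R h) - f (x + s *\<^sub>R k) + f x - s\<^sup>2 * (H k \<bullet> h)\<bar>
           \<le> \<epsilon> * s\<^sup>2 * ((2 * norm h + norm k) * norm h)"
proof -
  have near: "norm (s *\<^sub>R k + t *\<^sub>R h) + norm (t *\<^sub>R h) \<le> s * (2 * norm h + norm k)"
    "norm (s *\<^sub>R k + t *\<^sub>R h) < min r \<delta>" "norm (t *\<^sub>R h) < min r \<delta>" if "0 \<le> t" "t \<le> s" for t
  proof -
    have "t * norm h \<le> s * norm h" using that by (intro mult_right_mono) auto
    moreover have "norm (s *\<^sub>R k + t *\<^sub>R h) \<le> s * norm k + t * norm h"
      using norm_triangle_ineq[of "s *\<^sub>R k" "t *\<^sub>R h"] that s(1) by simp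
    moreover have "norm (t *\<^sub>R h) = t * norm h" using that by simp
    moreover have "0 \<le> s * norm k" using s(1) by simp
    moreover have "s * norm h + s * norm k < r" "s * norm h + s * norm k < \<delta>"
      using s(2) by (simp_all add: distrib_left)
    ultimately show "norm (s *\<^sub>R k + t *\<^sub>R h) + norm (t *\<^sub>R h) \<le> s * (2 * norm h + norm k)"
      "norm (s *\<^sub>R k + t *\<^sub>R h) < min r \<delta>" "norm (t *\<^sub>R h) < min r \<delta>"
      unfolding min_less_iff_conj distrib_left by linarith+
  qed
  have "x + s *\<^sub>R k + t *\<^sub>R h \<in> S \<and> x + t *\<^sub>R h \<in> S" if "0 \<le> t" "t \<le> s" for t
    using ball near(2,3)[OF that] by (simp add: add.assoc)
  then obtain \<tau> where \<tau>: "0 < \<tau>" "\<tau> < s"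
    "f (x + s *\<^sub>R k + s *\<^sub>R h) - f (x + s *\<^sub>R h) - f (x + s *\<^sub>R k) + f x
      = s * ((g (x + s *\<^sub>R k + \<tau> *\<^sub>R h) - g (x + \<tau> *\<^sub>R h)) \<bullet> h)"
    using second_difference_mean_value[OF d1 _ s(1)] by blast
  have "0 \<le> \<tau>" "\<tau> \<le> s" using \<tau> by auto
  note near\<tau> = near[OF this]
  define D where "D = (g (x + s *\<^sub>R k + \<tau> *\<^sub>R h) - g (x + \<tau> *\<^sub>R h)) \<bullet> h"
  have "\<bar>D - H (s *\<^sub>R k) \<bullet> h\<bar> \<le> \<epsilon> * (norm (s *\<^sub>R k + \<tau> *\<^sub>R h) + norm (\<tau> *\<^sub>R h)) * norm h"
    using linearization_diff_inner_le[where \<delta> = \<delta> and u = "x + s *\<^sub>R k + \<tau> *\<^sub>R h" and v = "x + \<tau> *\<^sub>R h",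
        OF lin R] near\<tau>(2,3)
    by (simp add: D_def add.assoc)
  also have "\<dots> \<le> \<epsilon> * (s * (2 * norm h + norm k)) * norm h"
    using near\<tau>(1) \<epsilon> by (intro mult_right_mono mult_left_mono) auto
  finally have "s * \<bar>D - s * (H k \<bullet> h)\<bar> \<le> s * (\<epsilon> * (s * (2 * norm h + norm k)) * norm h)"
    using lin s(1) by (simp add: linear_scale)
  moreover have eq: "f (x + s *\<^sub>R k + s *\<^sub>R h) - f (x + s *\<^sub>R h) - f (x + s *\<^sub>R k) + f x - s\<^sup>2 * (H k \<bullet> h)
      = s * (D - s * (H k \<bullet> h))"
    using \<tau>(3) by (simp add: D_def power2_eq_square algebra_simps)
  ultimately have "\<bar>f (x + s *\<^sub>R k + s *\<^sub>R h) - f (x + s *\<^sub>R h) - f (x + s *\<^sub>R k) + f x - s\<^sup>2 * (H k \<bullet> h)\<bar>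
      \<le> s * (\<epsilon> * (s * (2 * norm h + norm k)) * norm h)"
    using s(1) by (simp only: eq abs_mult abs_of_pos)
  then show ?thesis by (simp add: power2_eq_square algebra_simps)
qed

text \<open>Symmetry of the second derivative: the second difference at scale \<open>s\<close> is symmetric in
  \<open>h\<close> and \<open>k\<close>, and it approximates both \<open>s\<^sup>2 * (H k \<bullet> h)\<close> and \<open>s\<^sup>2 * (H h \<bullet> k)\<close> up to \<open>o(s\<^sup>2)\<close>.\<close>

lemma second_derivative_symmetric:
  fixes f :: "'a::real_inner \<Rightarrow> real"
  assumes S: "open S" "x \<in> S"
    and d1: "\<And>y. y \<in> S \<Longrightarrow> (f has_derivative (\<lambda>v. g y \<bullet> v)) (at y)"
    and d2: "(g has_derivative H) (at x)"
  shows "H k \<bullet> h = H h \<bullet> k"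
proof (rule ccontr)
  assume "H k \<bullet> h \<noteq> H h \<bullet> k"
  define D where "D = \<bar>H k \<bullet> h - H h \<bullet> k\<bar>"
  define C where "C = (2 * norm h + norm k) * norm h + (2 * norm k + norm h) * norm k + 1"
  define \<epsilon> where "\<epsilon> = D / (2 * C)"
  have D: "D > 0" using \<open>H k \<bullet> h \<noteq> H h \<bullet> k\<close> by (simp add: D_def)
  have C: "C > 0" unfolding C_def by (intro add_nonneg_pos) auto
  have \<epsilon>: "\<epsilon> > 0" using D C by (simp add: \<epsilon>_def)
  have lin: "linear H" using d2 has_derivative_linear by blast
  obtain r where r: "r > 0" "ball x r \<subseteq> S" using S openE by blast
  then have ball: "\<And>y. norm (y - x) < r \<Longrightarrow> y \<in> S" by (auto simp: dist_norm norm_minus_commute)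
  obtain \<delta> where \<delta>: "\<delta> > 0" "\<And>y. norm (y - x) < \<delta> \<Longrightarrow> norm (g y - g x - H (y - x)) \<le> \<epsilon> * norm (y - x)"
    using d2 \<epsilon> unfolding has_derivative_at_alt by blast
  define s where "s = min r \<delta> / (2 * (norm h + norm k + 1))"
  have pos: "norm h + norm k + 1 > 0" by (simp add: add_nonneg_pos)
  have s: "s > 0" using r \<delta> pos by (simp add: s_def)
  have "s * (norm h + norm k) < s * (norm h + norm k + 1)" using s by simp
  also have "\<dots> = min r \<delta> / 2" unfolding s_def using pos by (simp add: field_simps)
  finally have small: "s * (norm h + norm k) < min r \<delta>" "s * (norm k + norm h) < min r \<delta>"
    using r \<delta> by (simp_all add: add.commute)
  define P where "P = f (x + s *\<^sub>R k + s *\<^sub>R h) - f (x + s *\<^sub>R h) - f (x + s *\<^sub>R k) + f x"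
  have "\<bar>P - s\<^sup>2 * (H k \<bullet> h)\<bar> \<le> \<epsilon> * s\<^sup>2 * ((2 * norm h + norm k) * norm h)"
    using second_difference_approx[OF ball d1 lin \<delta>(2) _ s small(1)] \<epsilon> by (simp add: P_def)
  moreover have "\<bar>P - s\<^sup>2 * (H h \<bullet> k)\<bar> \<le> \<epsilon> * s\<^sup>2 * ((2 * norm k + norm h) * norm k)"
    using second_difference_approx[OF ball d1 lin \<delta>(2) _ s small(2)] \<epsilon>
    by (simp add: P_def algebra_simps)
  moreover have "s\<^sup>2 * D \<le> \<bar>P - s\<^sup>2 * (H h \<bullet> k)\<bar> + \<bar>P - s\<^sup>2 * (H k \<bullet> h)\<bar>"
  proof -
    have "(P - s\<^sup>2 * (H h \<bullet> k)) - (P - s\<^sup>2 * (H k \<bullet> h)) = s\<^sup>2 * (H k \<bullet> h - H h \<bullet> k)"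
      by (simp add: algebra_simps)
    then have "s\<^sup>2 * D = \<bar>(P - s\<^sup>2 * (H h \<bullet> k)) - (P - s\<^sup>2 * (H k \<bullet> h))\<bar>"
      by (simp only: D_def abs_mult abs_power2)
    then show ?thesis by (simp only: abs_triangle_ineq4)
  qed
  ultimately have "s\<^sup>2 * D \<le> \<epsilon> * s\<^sup>2 * (C - 1)" by (simp add: C_def algebra_simps)
  also have "\<dots> < s\<^sup>2 * (D / 2)" using \<epsilon> s C by (simp add: \<epsilon>_def field_simps)
  finally show False using D s by simp
qed

lemma convex_on_gradient_monotone:
  fixes f :: "'a::real_inner \<Rightarrow> real"
  assumes cv: "convex_on S f"
    and d1: "\<And>y. y \<in> S \<Longrightarrow> (f has_derivative (\<lambda>v. g y \<bullet> v)) (at y)"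
    and y: "y \<in> S" and z: "z \<in> S"
  shows "(g y - g z) \<bullet> (y - z) \<ge> 0"
proof -
  have "f z + g z \<bullet> (y - z) \<le> f y" by (rule convex_on_gradient_ineq[OF cv d1 z y])
  moreover have "f y + g y \<bullet> (z - y) \<le> f z" by (rule convex_on_gradient_ineq[OF cv d1 y z])
  ultimately have "g z \<bullet> (y - z) + g y \<bullet> (z - y) \<le> 0" by simp
  moreover have "g y \<bullet> (z - y) = - (g y \<bullet> (y - z))" by (simp add: inner_diff_right)
  ultimately show ?thesis by (simp add: inner_diff_left)
qed

lemma convex_on_second_derivative_nonneg:
  fixes f :: "'a::real_inner \<Rightarrow> real"
  assumes S: "open S" "x \<in> S"
    and cv: "convex_on S f"
    and d1: "\<And>y. y \<in> S \<Longrightarrow> (f has_derivative (\<lambda>v. g y \<bullet> v)) (at y)"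
    and d2: "(g has_derivative H) (at x)"
  shows "H h \<bullet> h \<ge> 0"
proof (rule ccontr)
  assume "\<not> ?thesis"
  then have neg: "H h \<bullet> h < 0" by simp
  have "((\<lambda>t. g (x + t *\<^sub>R h) \<bullet> h) has_real_derivative (H h \<bullet> h)) (at 0)"
    by (rule has_real_derivative_on_line_inner) (use d2 in simp)
  then obtain d where d: "d > 0" "\<And>t. t > 0 \<Longrightarrow> t < d \<Longrightarrow> g (x + 0 *\<^sub>R h) \<bullet> h > g (x + (0 + t) *\<^sub>R h) \<bullet> h"
    using DERIV_neg_dec_right[OF _ neg] by blast
  obtain r where r: "r > 0" "ball x r \<subseteq> S" using S openE by blast
  define t where "t = min (d / 2) (r / (2 * (norm h + 1)))"
  have hp: "norm h + 1 > 0" by (simp add: add_nonneg_pos)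
  have t0: "t > 0" using d r hp by (simp add: t_def)
  have td: "t < d" using d by (simp add: t_def)
  have "t * (norm h + 1) \<le> r / (2 * (norm h + 1)) * (norm h + 1)"
    using hp by (intro mult_right_mono) (auto simp: t_def)
  also have "\<dots> = r / 2" using hp by (simp add: field_simps)
  finally have "t * norm h < r" using r t0 by (simp add: algebra_simps)
  then have inO: "x + t *\<^sub>R h \<in> S" using r t0 by (auto simp: dist_norm)
  have "(g (x + t *\<^sub>R h) - g x) \<bullet> ((x + t *\<^sub>R h) - x) \<ge> 0"
    by (rule convex_on_gradient_monotone[OF cv d1 inO S(2)])
  then have "t * ((g (x + t *\<^sub>R h) - g x) \<bullet> h) \<ge> 0" by simp
  then have "(g (x + t *\<^sub>R h) - g x) \<bullet> h \<ge> 0" using t0 by (simp add: zero_le_mult_iff)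
  moreover have "g x \<bullet> h > g (x + t *\<^sub>R h) \<bullet> h" using d(2)[OF t0 td] by simp
  ultimately show False by (simp add: inner_diff_left)
qed

text \<open>Polarization: with \<open>s = norm (H u) / norm u\<close>, \<open>4 s (norm (H u))\<^sup>2\<close> is the difference of the
  quadratic form at \<open>s u + H u\<close> and at \<open>s u - H u\<close>.\<close>

lemma symmetric_nonneg_operator_norm_le:
  fixes H :: "'a::real_inner \<Rightarrow> 'a"
  assumes lin: "linear H"
    and sym: "\<And>u v. H u \<bullet> v = H v \<bullet> u"
    and psd: "\<And>u. H u \<bullet> u \<ge> 0"
    and ub: "\<And>u. H u \<bullet> u \<le> M * (norm u)\<^sup>2"
  shows "norm (H u) \<le> M * norm u"
proof (cases "H u = 0")
  case True
  have "M * (norm u)\<^sup>2 \<ge> 0" using psd ub order_trans by blast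
  then show ?thesis using True
    by (cases "u = 0") (auto simp: zero_le_mult_iff)
next
  case False
  then have u0: "u \<noteq> 0" using lin linear_0 by force
  define v where "v = H u"
  have nv: "norm v > 0" using False by (simp add: v_def)
  have nu: "norm u > 0" using u0 by simp
  define s where "s = norm v / norm u"
  have s0: "s > 0" using nv nu by (simp add: s_def)
  have Hl: "H (s *\<^sub>R u + v) = s *\<^sub>R H u + H v" "H (s *\<^sub>R u - v) = s *\<^sub>R H u - H v"
    using lin by (simp_all add: linear_add linear_diff linear_scale)
  have "H (s *\<^sub>R u + v) \<bullet> (s *\<^sub>R u + v) - H (s *\<^sub>R u - v) \<bullet> (s *\<^sub>R u - v)
        = 2 * s * (H u \<bullet> v) + 2 * s * (H v \<bullet> u)"
    unfolding Hl by (simp add: inner_add_left inner_add_right inner_diff_left inner_diff_right algebra_simps)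
  also have "\<dots> = 4 * s * (norm v)\<^sup>2" using sym[of v u] by (simp add: v_def power2_norm_eq_inner)
  finally have eq: "4 * s * (norm v)\<^sup>2 = H (s *\<^sub>R u + v) \<bullet> (s *\<^sub>R u + v) - H (s *\<^sub>R u - v) \<bullet> (s *\<^sub>R u - v)" by simp
  have M0: "M \<ge> 0"
  proof -
    have "0 \<le> M * (norm u)\<^sup>2" using psd[of u] ub[of u] by linarith
    then show ?thesis using nu by (simp add: zero_le_mult_iff)
  qed
  have "(norm (s *\<^sub>R u + v))\<^sup>2 \<le> (s * norm u + norm v)\<^sup>2"
    using norm_triangle_ineq[of "s *\<^sub>R u" v] s0 by (intro power_mono) auto
  also have "s * norm u = norm v" using nu by (simp add: s_def)
  finally have n2: "(norm (s *\<^sub>R u + v))\<^sup>2 \<le> 4 * (norm v)\<^sup>2" by (simp add: power2_eq_square)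
  have "4 * s * (norm v)\<^sup>2 \<le> M * (norm (s *\<^sub>R u + v))\<^sup>2"
    using eq ub[of "s *\<^sub>R u + v"] psd[of "s *\<^sub>R u - v"] by linarith
  also have "\<dots> \<le> M * (4 * (norm v)\<^sup>2)" using n2 M0 by (rule mult_left_mono)
  finally have "s * (4 * (norm v)\<^sup>2) \<le> M * (4 * (norm v)\<^sup>2)" by simp
  then have "s \<le> M" using nv by (simp add: mult_le_cancel_right)
  then have "norm v / norm u \<le> M" by (simp add: s_def)
  then show ?thesis using nu by (simp add: v_def pos_divide_le_eq)
qed

lemma strongly_convex_on_gradient_ineq:
  fixes f :: "'a::real_inner \<Rightarrow> real"
  assumes sc: "strongly_convex_on \<mu> S f"
    and d: "\<And>x. x \<in> S \<Longrightarrow> (f has_derivative (\<lambda>v. g x \<bullet> v)) (at x)"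
    and a: "a \<in> S" and b: "b \<in> S"
  shows "f a + g a \<bullet> (b - a) + \<mu> / 2 * (norm (b - a))\<^sup>2 \<le> f b"
proof -
  define q where "q u = f u - \<mu> / 2 * (norm u)\<^sup>2" for u
  have cv: "convex_on S q" using sc unfolding strongly_convex_on_def q_def .
  have "(q has_derivative (\<lambda>v. (g u - \<mu> *\<^sub>R u) \<bullet> v)) (at u)" if u: "u \<in> S" for u
  proof -
    have "((\<lambda>u. u \<bullet> u) has_derivative (\<lambda>v. u \<bullet> v + v \<bullet> u)) (at u)"
      by (intro has_derivative_inner has_derivative_ident)
    moreover have "(\<lambda>v. u \<bullet> v + v \<bullet> u) = (\<lambda>v. 2 * (u \<bullet> v))" by (auto simp: inner_commute)
    ultimately have "((\<lambda>u. (norm u)\<^sup>2) has_derivative (\<lambda>v. 2 * (u \<bullet> v))) (at u)"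
      by (simp only: power2_norm_eq_inner)
    then have "(q has_derivative (\<lambda>v. g u \<bullet> v - \<mu> / 2 * (2 * (u \<bullet> v)))) (at u)"
      unfolding q_def[abs_def] by (intro has_derivative_diff has_derivative_mult_right d u)
    then show ?thesis by (simp add: inner_diff_left)
  qed
  then have "q a + (g a - \<mu> *\<^sub>R a) \<bullet> (b - a) \<le> q b"
    by (rule convex_on_gradient_ineq[OF cv _ a b])
  moreover have "(norm (b - a))\<^sup>2 = (norm b)\<^sup>2 - 2 * (a \<bullet> b) + (norm a)\<^sup>2"
    by (simp add: power2_norm_eq_inner inner_diff_left inner_diff_right inner_commute)
  ultimately show ?thesis
    by (simp add: q_def inner_diff_left inner_diff_right power2_norm_eq_inner algebra_simps)
qed

lemma inner_le_weighted_norms: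
  fixes u v :: "'a::real_inner"
  assumes "0 < k"
  shows "u \<bullet> v \<le> k / 4 * (norm v)\<^sup>2 + (norm u)\<^sup>2 / k"
proof -
  have "0 \<le> (k * norm v - 2 * norm u)\<^sup>2 / (4 * k)" using assms by simp
  also have "\<dots> = k / 4 * (norm v)\<^sup>2 + (norm u)\<^sup>2 / k - norm u * norm v"
    using assms by (simp add: power2_eq_square field_simps)
  finally show ?thesis using norm_cauchy_schwarz[of u v] by linarith
qed

section \<open>Averaging with stochastic weights\<close>

definition diam :: "nat \<Rightarrow> (nat \<Rightarrow> 'a::real_normed_vector) \<Rightarrow> real" where
  "diam m v = Max ((\<lambda>(i, k). norm (v i - v k)) ` ({..<m} \<times> {..<m}))"

lemma diam_ge: "i < m \<Longrightarrow> k < m \<Longrightarrow> norm (v i - v k) \<le> diam m v"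
  unfolding diam_def by (rule Max_ge) auto

lemma diam_le: "m \<ge> 1 \<Longrightarrow> (\<And>i k. i < m \<Longrightarrow> k < m \<Longrightarrow> norm (v i - v k) \<le> c) \<Longrightarrow> diam m v \<le> c"
  unfolding diam_def by (subst Max_le_iff) (auto simp: lessThan_empty_iff)

lemma diam_nonneg: "m \<ge> 1 \<Longrightarrow> 0 \<le> diam m v"
  using diam_ge[of 0 m 0 v] by simp

lemma norm_diff_weighted_sums_le_diam:
  fixes v :: "nat \<Rightarrow> 'a::real_normed_vector"
  assumes A: "\<And>j. j < m \<Longrightarrow> A j \<ge> 0" and B: "\<And>j. j < m \<Longrightarrow> B j \<ge> 0"
    and sA: "(\<Sum>j<m. A j) = lam" and sB: "(\<Sum>j<m. B j) = lam"
  shows "norm ((\<Sum>j<m. A j *\<^sub>R v j) - (\<Sum>j<m. B j *\<^sub>R v j)) \<le> lam * diam m v"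
proof (cases "lam = 0")
  case True
  then have "\<forall>j\<in>{..<m}. A j = 0" "\<forall>j\<in>{..<m}. B j = 0"
    using sum_nonneg_eq_0_iff[of "{..<m}" A] sum_nonneg_eq_0_iff[of "{..<m}" B] A B sA sB by auto
  then show ?thesis using True by simp
next
  case False
  have l0: "lam \<ge> 0" using sA A by (metis lessThan_iff sum_nonneg)
  then have lp: "lam > 0" using False by simp
  have eq: "lam *\<^sub>R ((\<Sum>j<m. A j *\<^sub>R v j) - (\<Sum>j<m. B j *\<^sub>R v j))
      = (\<Sum>j<m. \<Sum>l<m. (A j * B l) *\<^sub>R (v j - v l))"
  proof -
    have "(\<Sum>j<m. \<Sum>l<m. (A j * B l) *\<^sub>R (v j - v l))
        = (\<Sum>j<m. \<Sum>l<m. (A j * B l) *\<^sub>R v j) - (\<Sum>j<m. \<Sum>l<m. (A j * B l) *\<^sub>R v l)"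
      by (simp add: scaleR_diff_right sum_subtractf)
    also have "(\<Sum>j<m. \<Sum>l<m. (A j * B l) *\<^sub>R v j) = lam *\<^sub>R (\<Sum>j<m. A j *\<^sub>R v j)"
      by (simp add: scaleR_sum_right sB[symmetric] scaleR_sum_left[symmetric] sum_distrib_left[symmetric] mult.commute)
    also have "(\<Sum>j<m. \<Sum>l<m. (A j * B l) *\<^sub>R v l) = lam *\<^sub>R (\<Sum>l<m. B l *\<^sub>R v l)"
      by (subst sum.swap)
        (simp add: scaleR_sum_right sA[symmetric] scaleR_sum_left[symmetric] sum_distrib_right[symmetric])
    finally show ?thesis by (simp add: scaleR_diff_right)
  qed
  have "lam * norm ((\<Sum>j<m. A j *\<^sub>R v j) - (\<Sum>j<m. B j *\<^sub>R v j))
      = norm (\<Sum>j<m. \<Sum>l<m. (A j * B l) *\<^sub>R (v j - v l))"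
    using l0 by (simp flip: eq)
  also have "\<dots> \<le> (\<Sum>j<m. \<Sum>l<m. norm ((A j * B l) *\<^sub>R (v j - v l)))"
    by (rule order_trans[OF norm_sum sum_mono]) (rule norm_sum)
  also have "\<dots> \<le> (\<Sum>j<m. \<Sum>l<m. (A j * B l) * diam m v)"
    using A B by (intro sum_mono) (auto intro!: mult_left_mono diam_ge)
  also have "\<dots> = lam * (lam * diam m v)"
    by (simp add: sum_distrib_right[symmetric] sum_distrib_left[symmetric] sA sB mult.assoc)
  finally show ?thesis using lp by simp
qed

lemma norm_diff_stochastic_sums_le:
  fixes v :: "nat \<Rightarrow> 'a::real_normed_vector"
  assumes P: "\<And>j. j < m \<Longrightarrow> P j \<ge> \<delta>" and Q: "\<And>j. j < m \<Longrightarrow> Q j \<ge> \<delta>"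
    and sP: "(\<Sum>j<m. P j) = 1" and sQ: "(\<Sum>j<m. Q j) = 1"
  shows "norm ((\<Sum>j<m. P j *\<^sub>R v j) - (\<Sum>j<m. Q j *\<^sub>R v j)) \<le> (1 - real m * \<delta>) * diam m v"
proof -
  have "norm ((\<Sum>j<m. (P j - \<delta>) *\<^sub>R v j) - (\<Sum>j<m. (Q j - \<delta>) *\<^sub>R v j)) \<le> (1 - real m * \<delta>) * diam m v"
    by (rule norm_diff_weighted_sums_le_diam) (use P Q sP sQ in \<open>auto simp: sum_subtractf\<close>)
  moreover have "(\<Sum>j<m. (P j - \<delta>) *\<^sub>R v j) - (\<Sum>j<m. (Q j - \<delta>) *\<^sub>R v j)
      = (\<Sum>j<m. P j *\<^sub>R v j) - (\<Sum>j<m. Q j *\<^sub>R v j)"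
    by (simp add: scaleR_diff_left sum_subtractf)
  ultimately show ?thesis by simp
qed

fun wprod :: "(nat \<Rightarrow> nat \<Rightarrow> nat \<Rightarrow> real) \<Rightarrow> nat \<Rightarrow> nat \<Rightarrow> nat \<Rightarrow> nat \<Rightarrow> nat \<Rightarrow> real" where
  "wprod W m s 0 i j = (if i = j then 1 else 0)"
| "wprod W m s (Suc n) i j = (\<Sum>l<m. W (s + n) i l * wprod W m s n l j)"

lemma wprod_nonneg:
  assumes "\<And>k i j. i < m \<Longrightarrow> j < m \<Longrightarrow> W k i j \<ge> 0"
  shows "i < m \<Longrightarrow> j < m \<Longrightarrow> wprod W m s n i j \<ge> 0"
proof (induction n arbitrary: i)
  case (Suc n)
  then show ?case using assms by (auto intro!: sum_nonneg mult_nonneg_nonneg)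
qed simp

lemma wprod_row_sum:
  assumes "\<And>k i. i < m \<Longrightarrow> (\<Sum>j<m. W k i j) = 1"
  shows "i < m \<Longrightarrow> (\<Sum>j<m. wprod W m s n i j) = 1"
proof (induction n arbitrary: i)
  case 0
  then show ?case by (simp add: sum.delta)
next
  case (Suc n)
  have "(\<Sum>j<m. wprod W m s (Suc n) i j) = (\<Sum>j<m. \<Sum>l<m. W (s + n) i l * wprod W m s n l j)" by simp
  also have "\<dots> = (\<Sum>l<m. \<Sum>j<m. W (s + n) i l * wprod W m s n l j)" by (rule sum.swap)
  also have "\<dots> = (\<Sum>l<m. W (s + n) i l * (\<Sum>j<m. wprod W m s n l j))" by (simp add: sum_distrib_left)
  also have "\<dots> = (\<Sum>l<m. W (s + n) i l)" using Suc by simp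
  also have "\<dots> = 1" using assms Suc by simp
  finally show ?case .
qed

lemma wprod_0_apply:
  fixes v :: "nat \<Rightarrow> 'a::real_vector"
  assumes "i < m"
  shows "(\<Sum>j<m. wprod W m s 0 i j *\<^sub>R v j) = v i"
proof -
  have "(\<Sum>j<m. wprod W m s 0 i j *\<^sub>R v j) = (\<Sum>j<m. if i = j then v j else 0)"
    by (rule sum.cong) auto
  then show ?thesis using assms by simp
qed

lemma wprod_Suc_apply:
  fixes v :: "nat \<Rightarrow> 'a::real_vector"
  shows "(\<Sum>j<m. wprod W m s (Suc n) i j *\<^sub>R v j)
    = (\<Sum>l<m. W (s + n) i l *\<^sub>R (\<Sum>j<m. wprod W m s n l j *\<^sub>R v j))"
proof -
  have "(\<Sum>j<m. wprod W m s (Suc n) i j *\<^sub>R v j) = (\<Sum>j<m. \<Sum>l<m. (W (s + n) i l * wprod W m s n l j) *\<^sub>R v j)"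
    by (simp add: scaleR_sum_left)
  also have "\<dots> = (\<Sum>l<m. \<Sum>j<m. (W (s + n) i l * wprod W m s n l j) *\<^sub>R v j)" by (rule sum.swap)
  also have "\<dots> = (\<Sum>l<m. W (s + n) i l *\<^sub>R (\<Sum>j<m. wprod W m s n l j *\<^sub>R v j))"
    by (simp add: scaleR_sum_right)
  finally show ?thesis .
qed

lemma perturbed_averaging_deviation:
  fixes v e :: "nat \<Rightarrow> nat \<Rightarrow> 'a::real_normed_vector"
  assumes Wn: "\<And>k i j. i < m \<Longrightarrow> j < m \<Longrightarrow> W k i j \<ge> 0"
    and Wr: "\<And>k i. i < m \<Longrightarrow> (\<Sum>j<m. W k i j) = 1"
    and upd: "\<And>k i. i < m \<Longrightarrow> v i (Suc k) = (\<Sum>j<m. W k i j *\<^sub>R (v j k + e j k))"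
    and eb: "\<And>k j. j < m \<Longrightarrow> norm (e j k) \<le> p k"
    and i: "i < m"
  shows "norm (v i (s + n) - (\<Sum>j<m. wprod W m s n i j *\<^sub>R v j s)) \<le> (\<Sum>k<n. p (s + k))"
  using i
proof (induction n arbitrary: i)
  case 0
  then show ?case by (simp del: wprod.simps add: wprod_0_apply)
next
  case (Suc n)
  define u where "u l = (\<Sum>j<m. wprod W m s n l j *\<^sub>R v j s)" for l
  have "(\<Sum>j<m. wprod W m s (Suc n) i j *\<^sub>R v j s) = (\<Sum>l<m. W (s + n) i l *\<^sub>R u l)"
    unfolding u_def by (rule wprod_Suc_apply)
  moreover have "v i (s + Suc n) = (\<Sum>l<m. W (s + n) i l *\<^sub>R (v l (s + n) + e l (s + n)))"
    using upd[OF Suc.prems] by simp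
  ultimately have eq: "v i (s + Suc n) - (\<Sum>j<m. wprod W m s (Suc n) i j *\<^sub>R v j s)
      = (\<Sum>l<m. W (s + n) i l *\<^sub>R ((v l (s + n) - u l) + e l (s + n)))"
    by (simp add: sum_subtractf[symmetric] algebra_simps del: wprod.simps)
  have "norm (\<Sum>l<m. W (s + n) i l *\<^sub>R ((v l (s + n) - u l) + e l (s + n))) \<le> (\<Sum>l<m. W (s + n) i l * ((\<Sum>k<n. p (s + k)) + p (s + n)))"
  proof (rule order_trans[OF norm_sum sum_mono])
    fix l assume l: "l \<in> {..<m}"
    have "norm ((v l (s + n) - u l) + e l (s + n)) \<le> (\<Sum>k<n. p (s + k)) + p (s + n)"
      using Suc.IH[of l] eb[of l "s + n"] l norm_triangle_ineq[of "v l (s + n) - u l" "e l (s + n)"]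
      by (auto simp: u_def)
    then show "norm (W (s + n) i l *\<^sub>R ((v l (s + n) - u l) + e l (s + n)))
        \<le> W (s + n) i l * ((\<Sum>k<n. p (s + k)) + p (s + n))"
      using Wn[OF Suc.prems, of l "s + n"] l by (simp add: mult_left_mono)
  qed
  also have "\<dots> = (\<Sum>k<Suc n. p (s + k))"
    using Wr[OF Suc.prems, of "s + n"] by (simp add: sum_distrib_right[symmetric])
  finally show ?case by (simp only: eq)
qed

lemma diam_perturbed_averaging:
  fixes v e :: "nat \<Rightarrow> nat \<Rightarrow> 'a::real_normed_vector"
  assumes m: "m \<ge> 1"
    and Wn: "\<And>k i j. i < m \<Longrightarrow> j < m \<Longrightarrow> W k i j \<ge> 0"
    and Wr: "\<And>k i. i < m \<Longrightarrow> (\<Sum>j<m. W k i j) = 1"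
    and upd: "\<And>k i. i < m \<Longrightarrow> v i (Suc k) = (\<Sum>j<m. W k i j *\<^sub>R (v j k + e j k))"
    and eb: "\<And>k j. j < m \<Longrightarrow> norm (e j k) \<le> p k"
    and lb: "\<And>i j. i < m \<Longrightarrow> j < m \<Longrightarrow> wprod W m s n i j \<ge> \<delta>"
  shows "diam m (\<lambda>i. v i (s + n)) \<le> (1 - real m * \<delta>) * diam m (\<lambda>i. v i s) + 2 * (\<Sum>k<n. p (s + k))"
proof (rule diam_le[OF m])
  fix i i' assume ii': "i < m" "i' < m"
  define u where "u l = (\<Sum>j<m. wprod W m s n l j *\<^sub>R v j s)" for l
  have dev: "norm (v l (s + n) - u l) \<le> (\<Sum>k<n. p (s + k))" if "l < m" for l
    unfolding u_def
    by (rule perturbed_averaging_deviation[where v = v and e = e and p = p, OF Wn Wr upd eb that])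
  have "norm (v i (s + n) - v i' (s + n)) \<le> norm (u i - u i') + norm (v i (s + n) - u i) + norm (v i' (s + n) - u i')"
    using norm_triangle_ineq[of "u i - u i'" "(v i (s + n) - u i) - (v i' (s + n) - u i')"]
      norm_triangle_ineq4[of "v i (s + n) - u i" "v i' (s + n) - u i'"]
    by (simp add: algebra_simps)
  also have "norm (u i - u i') \<le> (1 - real m * \<delta>) * diam m (\<lambda>i. v i s)"
    unfolding u_def by (rule norm_diff_stochastic_sums_le) (use lb ii' wprod_row_sum[OF Wr] in auto)
  finally show "norm (v i (s + n) - v i' (s + n)) \<le> (1 - real m * \<delta>) * diam m (\<lambda>i. v i s) + 2 * (\<Sum>k<n. p (s + k))"
    using dev[OF ii'(1)] dev[OF ii'(2)] by simp
qed

lemma rtrancl_exits_set: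
  assumes "(r, q) \<in> Rel\<^sup>*" "r \<in> S" "q \<notin> S"
  shows "\<exists>k i. (k, i) \<in> Rel \<and> k \<in> S \<and> i \<notin> S"
proof -
  have "q \<in> S \<or> (\<exists>k i. (k, i) \<in> Rel \<and> k \<in> S \<and> i \<notin> S)"
    using assms(1) by (induction rule: rtrancl_induct) (use assms(2) in auto)
  then show ?thesis using assms(3) by blast
qed

locale positive_weights =
  fixes m :: nat and M :: "nat \<Rightarrow> nat \<Rightarrow> nat \<Rightarrow> real" and E :: "nat \<Rightarrow> (nat \<times> nat) set"
    and \<gamma> :: real
  assumes nonneg: "\<And>k i j. i < m \<Longrightarrow> j < m \<Longrightarrow> 0 \<le> M k i j"
    and diag: "\<And>k i. i < m \<Longrightarrow> \<gamma> \<le> M k i i"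
    and edge: "\<And>k i j. i < m \<Longrightarrow> j < m \<Longrightarrow> j \<noteq> i \<Longrightarrow> (j, i) \<in> E k \<Longrightarrow> \<gamma> \<le> M k i j"
    and \<gamma>_pos: "0 < \<gamma>"
begin

definition reached :: "nat \<Rightarrow> nat \<Rightarrow> nat \<Rightarrow> nat set" where
  "reached s j n = {i. i < m \<and> \<gamma> ^ n \<le> wprod M m s n i j}"

lemma reached_subset: "reached s j n \<subseteq> {..<m}"
  by (auto simp: reached_def)

lemma finite_reached: "finite (reached s j n)"
  by (rule finite_subset[OF reached_subset]) simp

lemma reached_Suc:
  assumes j: "j < m" and l: "l \<in> reached s j n" and i: "i < m" and M: "\<gamma> \<le> M (s + n) i l"
  shows "i \<in> reached s j (Suc n)"
proof -
  have l': "l < m" "\<gamma> ^ n \<le> wprod M m s n l j" using l by (auto simp: reached_def)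
  have "\<gamma> ^ Suc n \<le> M (s + n) i l * wprod M m s n l j"
    using l' M \<gamma>_pos by (simp add: mult_mono)
  also have "\<dots> \<le> wprod M m s (Suc n) i j"
    unfolding wprod.simps
    by (rule member_le_sum) (auto intro!: mult_nonneg_nonneg nonneg wprod_nonneg[of m M, OF nonneg] simp: i j l')
  finally show ?thesis using i by (simp add: reached_def)
qed

lemma reached_mono:
  assumes "j < m" "n \<le> n'"
  shows "reached s j n \<subseteq> reached s j n'"
  using assms(2)
proof (induction n' rule: dec_induct)
  case (step k)
  show ?case
  proof
    fix i assume "i \<in> reached s j n"
    then have "i \<in> reached s j k" "i < m" using step.IH by (auto simp: reached_def)
    then show "i \<in> reached s j (Suc k)" using reached_Suc[OF assms(1)] diag by blast
  qed
qed simp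

text \<open>During a window whose union graph is strongly connected, some edge leaves the reached set,
  and its head joins the set.\<close>

lemma card_reached_window_grows:
  assumes j: "j < m" and s: "s \<le> a * B"
    and conn: "strongly_connected_digraph {..<m} (\<Union>t\<in>{a * B..<(a + 1) * B}. E t)"
    and ne: "reached s j (a * B - s) \<noteq> {..<m}"
  shows "card (reached s j (a * B - s)) < card (reached s j ((a + 1) * B - s))"
proof -
  define R0 where "R0 = reached s j (a * B - s)"
  define R1 where "R1 = reached s j ((a + 1) * B - s)"
  have "j \<in> reached s j 0" using j by (simp add: reached_def)
  then have jR0: "j \<in> R0" using reached_mono[OF j, of 0] by (auto simp: R0_def)
  obtain q where q: "q < m" "q \<notin> R0" using ne reached_subset unfolding R0_def by blast
  have "(j, q) \<in> ((\<Union>t\<in>{a * B..<(a + 1) * B}. E t) \<inter> {..<m} \<times> {..<m})\<^sup>*"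
    using conn j q unfolding strongly_connected_digraph_def by blast
  then obtain k i where "(k, i) \<in> (\<Union>t\<in>{a * B..<(a + 1) * B}. E t) \<inter> {..<m} \<times> {..<m}" "k \<in> R0" "i \<notin> R0"
    using rtrancl_exits_set[OF _ jR0 q(2)] by blast
  then obtain t where t: "a * B \<le> t" "t < (a + 1) * B" "(k, i) \<in> E t" "k < m" "i < m"
    and ki: "k \<in> R0" "i \<notin> R0" by auto
  have "k \<in> reached s j (t - s)" using ki(1) reached_mono[OF j diff_le_mono[OF t(1)], of s]
    unfolding R0_def by blast
  moreover have "\<gamma> \<le> M (s + (t - s)) i k" using edge[of i k t] t ki s by auto
  ultimately have "i \<in> reached s j (Suc (t - s))" using reached_Suc[OF j _ t(5)] by blast
  moreover have "Suc (t - s) \<le> (a + 1) * B - s" using t(1,2) s by linarith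
  ultimately have "i \<in> R1" using reached_mono[OF j] unfolding R1_def by blast
  moreover have "R0 \<subseteq> R1" unfolding R0_def R1_def by (rule reached_mono[OF j]) simp
  ultimately have "insert i R0 \<subseteq> R1" by blast
  then have "card (insert i R0) \<le> card R1" unfolding R1_def by (intro card_mono finite_reached)
  moreover have "card (insert i R0) = Suc (card R0)" using ki(2) finite_reached by (simp add: R0_def)
  ultimately show ?thesis by (simp add: R0_def R1_def)
qed

lemma card_reached_windows:
  assumes j: "j < m" and s: "s \<le> a * B"
    and conn: "\<And>a. strongly_connected_digraph {..<m} (\<Union>t\<in>{a * B..<(a + 1) * B}. E t)"
    and k: "k < m"
  shows "k + 1 \<le> card (reached s j ((a + k) * B - s))"
  using k
proof (induction k)
  case 0
  have "j \<in> reached s j 0" using j by (simp add: reached_def)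
  then have "j \<in> reached s j (a * B - s)" using reached_mono[OF j] by blast
  then show ?case using finite_reached by (simp add: Suc_le_eq card_gt_0_iff) blast
next
  case (Suc k)
  have sk: "s \<le> (a + k) * B" using s by (meson le_add1 mult_le_mono1 order_trans)
  show ?case
  proof (cases "reached s j ((a + k) * B - s) = {..<m}")
    case True
    have "reached s j ((a + k) * B - s) \<subseteq> reached s j ((a + Suc k) * B - s)"
      by (rule reached_mono[OF j]) simp
    then have "reached s j ((a + Suc k) * B - s) = {..<m}" using True reached_subset by blast
    then show ?thesis using Suc.prems by simp
  next
    case False
    then show ?thesis using card_reached_window_grows[OF j sk conn False] Suc by simp
  qed
qed

lemma wprod_ge_pow:
  assumes m: "m \<ge> 1" and B: "B > 0"
    and conn: "\<And>a. strongly_connected_digraph {..<m} (\<Union>t\<in>{a * B..<(a + 1) * B}. E t)"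
    and i: "i < m" and j: "j < m"
  shows "\<gamma> ^ (m * B) \<le> wprod M m s (m * B) i j"
proof -
  define a where "a = s div B + 1"
  define n where "n = (a + (m - 1)) * B - s"
  have aB: "a * B = s div B * B + B" and nB: "(a + (m - 1)) * B = s div B * B + m * B"
    using m by (simp_all add: a_def algebra_simps)
  have "s div B * B + s mod B = s" by (rule div_mult_mod_eq)
  then have "s \<le> a * B" using aB mod_less_divisor[OF B, of s] by linarith
  then have "m \<le> card (reached s j n)"
    using card_reached_windows[where a = a and k = "m - 1" and s = s, OF j _ conn] m by (simp add: n_def)
  moreover have "card (reached s j n) \<le> m"
    using card_mono[OF finite_lessThan reached_subset] by simp
  ultimately have full: "reached s j n = {..<m}"
    by (intro card_subset_eq[OF finite_lessThan reached_subset]) simp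
  have "s div B * B \<le> s" by (rule div_times_less_eq_dividend)
  then have "n \<le> m * B" unfolding n_def nB by arith
  then have "reached s j (m * B) = {..<m}" using reached_mono[OF j] full reached_subset by blast
  then show ?thesis using i by (auto simp: reached_def)
qed

end

lemma window_recursion_decay:
  fixes u p :: "nat \<Rightarrow> real"
  assumes growth: "\<And>n. u n \<le> u 0 + 2 * (\<Sum>k<n. p k)"
    and window: "\<And>s. u (s + T) \<le> \<rho> * u s + 2 * (\<Sum>k<T. p (s + k))"
    and u_le: "\<And>k. k < \<nu> \<Longrightarrow> u k \<le> C * r ^ k"
    and p_le: "\<And>s k. s + k < \<nu> \<Longrightarrow> p (s + k) \<le> P * r ^ s"
    and T: "0 < T" and \<rho>: "0 \<le> \<rho>" and r: "0 < r" "r \<le> 1" and rT: "(1 + \<rho>) / 2 \<le> r ^ T"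
    and C: "0 \<le> C" and P: "0 \<le> P"
    and init: "u 0 + 2 * (real T * P) \<le> C / 2" and gain: "2 * (real T * P) \<le> (1 - \<rho>) / 2 * C"
  shows "u \<nu> \<le> C * r ^ \<nu>"
proof (cases "\<nu> < T")
  case True
  have "(\<Sum>k<\<nu>. p k) \<le> real \<nu> * P"
    using sum_bounded_above[of "{..<\<nu>}" p P] p_le[of 0] by simp
  also have "\<dots> \<le> real T * P" using True P by (intro mult_right_mono) auto
  finally have "u \<nu> \<le> C / 2" using growth[of \<nu>] init by linarith
  also have "C / 2 \<le> C * ((1 + \<rho>) / 2)" using C \<rho> by (simp add: field_simps)
  also have "\<dots> \<le> C * r ^ T" by (rule mult_left_mono[OF rT C])
  also have "\<dots> \<le> C * r ^ \<nu>" using True r C by (intro mult_left_mono power_decreasing) auto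
  finally show ?thesis .
next
  case False
  then obtain s where s: "\<nu> = s + T" by (metis add.commute le_add_diff_inverse not_less)
  have "(\<Sum>k<T. p (s + k)) \<le> real T * (P * r ^ s)"
    using sum_bounded_above[of "{..<T}" "\<lambda>k. p (s + k)" "P * r ^ s"] p_le s by simp
  then have "u \<nu> \<le> \<rho> * (C * r ^ s) + 2 * (real T * P) * r ^ s"
    using window[of s] mult_left_mono[OF u_le[of s] \<rho>] s T by (simp add: algebra_simps)
  also have "\<dots> \<le> ((1 + \<rho>) / 2 * C) * r ^ s"
    using mult_right_mono[OF gain, of "r ^ s"] r by (simp add: algebra_simps)
  also have "\<dots> \<le> (C * r ^ T) * r ^ s"
    using mult_right_mono[OF mult_left_mono[OF rT C], of "r ^ s"] r by (simp add: mult_ac)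
  finally show ?thesis by (simp add: s power_add mult_ac)
qed

lemma window_budget:
  fixes u0 Z g C :: real
  assumes budget: "2 * u0 + 2 * Z / g \<le> C" and g: "0 < g" "g \<le> 1 / 2" and Z: "0 \<le> Z" and u0: "0 \<le> u0"
  shows "u0 + Z \<le> C / 2" and "Z \<le> g * C"
proof -
  have "2 * Z / g \<le> C" using budget u0 by linarith
  then have "2 * Z \<le> C * g" using g by (simp add: pos_divide_le_eq)
  moreover have "2 * Z \<le> 2 * Z / g" using g Z mult_left_mono[of g 1 "2 * Z"] by (simp add: field_simps)
  ultimately show "u0 + Z \<le> C / 2" "Z \<le> g * C" using budget g Z by (simp_all add: algebra_simps)
qed

section \<open>The problem\<close>

locale sonata_problem =
  fixes m :: nat
    and K Oset :: "'a::euclidean_space set"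
    and f :: "nat \<Rightarrow> 'a \<Rightarrow> real"
    and gf :: "nat \<Rightarrow> 'a \<Rightarrow> 'a"
    and Hf :: "nat \<Rightarrow> 'a \<Rightarrow> 'a \<Rightarrow> 'a"
    and G :: "'a \<Rightarrow> real"
    and mu L :: real
    and E :: "nat \<Rightarrow> (nat \<times> nat) set"
    and B :: nat
    and c :: "nat \<Rightarrow> nat \<Rightarrow> nat \<Rightarrow> real"
    and c_l :: real
    and ft :: "nat \<Rightarrow> 'a \<Rightarrow> 'a \<Rightarrow> real"
    and gft :: "nat \<Rightarrow> 'a \<Rightarrow> 'a \<Rightarrow> 'a"
    and Hft :: "nat \<Rightarrow> 'a \<Rightarrow> 'a \<Rightarrow> 'a \<Rightarrow> 'a"
    and mut Du :: "nat \<Rightarrow> real"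
  assumes m_pos: "m \<ge> 1"
    and K_ne: "K \<noteq> {}" and K_convex: "convex K"
    and O_open: "open Oset" and K_sub_O: "K \<subseteq> Oset"
    and f_grad: "\<And>i x. i < m \<Longrightarrow> x \<in> Oset \<Longrightarrow> (f i has_derivative (\<lambda>h. gf i x \<bullet> h)) (at x)"
    and f_hess: "\<And>i x. i < m \<Longrightarrow> x \<in> Oset \<Longrightarrow> (gf i has_derivative Hf i x) (at x)"
    and f_convex: "\<And>i. i < m \<Longrightarrow> convex_on Oset (f i)"
    and mu_pos: "mu > 0"
    and F_hess_bounds: "\<And>x h. x \<in> K \<Longrightarrow>
        mu * (norm h)\<^sup>2 \<le> ((1 / real m) *\<^sub>R (\<Sum>i<m. Hf i x h)) \<bullet> h \<and> ((1 / real m) *\<^sub>R (\<Sum>i<m. Hf i x h)) \<bullet> h \<le> L * (norm h)\<^sup>2"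
    and G_convex: "convex_on K G"
    and B_pos: "B > 0"
    and B_conn: "\<And>k. strongly_connected_digraph {..<m} (\<Union>t\<in>{k * B..<(k + 1) * B}. E t)"
    and c_l_pos: "c_l > 0"
    and c_diag: "\<And>\<nu> i. i < m \<Longrightarrow> c \<nu> i i \<ge> c_l"
    and c_edge: "\<And>\<nu> i j. i < m \<Longrightarrow> j < m \<Longrightarrow> j \<noteq> i \<Longrightarrow> (j, i) \<in> E \<nu> \<Longrightarrow> c \<nu> i j \<ge> c_l"
    and c_zero: "\<And>\<nu> i j. i < m \<Longrightarrow> j < m \<Longrightarrow> j \<noteq> i \<Longrightarrow> (j, i) \<notin> E \<nu> \<Longrightarrow> c \<nu> i j = 0"
    and c_colstoch: "\<And>\<nu> j. j < m \<Longrightarrow> (\<Sum>i<m. c \<nu> i j) = 1"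
    and ft_grad: "\<And>i x y. i < m \<Longrightarrow> x \<in> Oset \<Longrightarrow> y \<in> Oset \<Longrightarrow>
        ((\<lambda>u. ft i u y) has_derivative (\<lambda>h. gft i x y \<bullet> h)) (at x)"
    and ft_hess: "\<And>i x y. i < m \<Longrightarrow> x \<in> Oset \<Longrightarrow> y \<in> Oset \<Longrightarrow>
        ((\<lambda>u. gft i u y) has_derivative Hft i x y) (at x)"
    and ft_grad_consistent: "\<And>i x. i < m \<Longrightarrow> x \<in> Oset \<Longrightarrow> gft i x x = gf i x"
    and mut_pos: "\<And>i. i < m \<Longrightarrow> mut i > 0"
    and ft_strongly_convex: "\<And>i x. i < m \<Longrightarrow> x \<in> K \<Longrightarrow> strongly_convex_on (mut i) K (\<lambda>u. ft i u x)"
    and D_upper: "\<And>i x y h. i < m \<Longrightarrow> x \<in> K \<Longrightarrow> y \<in> K \<Longrightarrow>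
        (Hft i x y h - (1 / real m) *\<^sub>R (\<Sum>i<m. Hf i x h)) \<bullet> h \<le> Du i * (norm h)\<^sup>2"
begin

definition HF where "HF x h = (1 / real m) *\<^sub>R (\<Sum>i<m. Hf i x h)"
definition gF where "gF x = (1 / real m) *\<^sub>R (\<Sum>i<m. gf i x)"
definition F where "F x = (1 / real m) * (\<Sum>i<m. f i x)"
definition U where "U x = (1 / real m) * (\<Sum>i<m. f i x) + G x"

lemma U_eq: "U x = F x + G x" by (simp add: U_def F_def)

lemma in_O: "x \<in> K \<Longrightarrow> x \<in> Oset" using K_sub_O by blast

lemma HF_bounds: "x \<in> K \<Longrightarrow> mu * (norm h)\<^sup>2 \<le> HF x h \<bullet> h" "x \<in> K \<Longrightarrow> HF x h \<bullet> h \<le> L * (norm h)\<^sup>2"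
  using F_hess_bounds unfolding HF_def by auto

lemma mu_le_L: "mu \<le> L"
proof -
  obtain x where x: "x \<in> K" using K_ne by blast
  obtain h :: 'a where h: "h \<in> Basis" using nonempty_Basis by blast
  then have "norm h = 1" by simp
  then show ?thesis using HF_bounds[OF x, of h] by simp
qed

lemma L_pos: "L > 0" using mu_le_L mu_pos by simp

lemma F_has_derivative: "x \<in> Oset \<Longrightarrow> (F has_derivative (\<lambda>h. gF x \<bullet> h)) (at x)"
proof -
  assume x: "x \<in> Oset"
  have "((\<lambda>x. \<Sum>i<m. f i x) has_derivative (\<lambda>h. \<Sum>i<m. gf i x \<bullet> h)) (at x)"
    by (rule has_derivative_sum) (use f_grad x in auto)
  then have "((\<lambda>x. (1 / real m) * (\<Sum>i<m. f i x)) has_derivative (\<lambda>h. (1 / real m) * (\<Sum>i<m. gf i x \<bullet> h))) (at x)"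
    by (rule has_derivative_mult_right)
  moreover have "(\<lambda>h. (1 / real m) * (\<Sum>i<m. gf i x \<bullet> h)) = (\<lambda>h. gF x \<bullet> h)"
    by (auto simp: gF_def inner_sum_left)
  ultimately show ?thesis unfolding F_def[abs_def] by simp
qed

lemma gF_has_derivative: "x \<in> Oset \<Longrightarrow> (gF has_derivative HF x) (at x)"
proof -
  assume x: "x \<in> Oset"
  have "((\<lambda>x. \<Sum>i<m. gf i x) has_derivative (\<lambda>h. \<Sum>i<m. Hf i x h)) (at x)"
    by (rule has_derivative_sum) (use f_hess x in auto)
  then have "((\<lambda>x. (1 / real m) *\<^sub>R (\<Sum>i<m. gf i x)) has_derivative (\<lambda>h. (1 / real m) *\<^sub>R (\<Sum>i<m. Hf i x h))) (at x)"
    by (rule has_derivative_scaleR_right)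
  then show ?thesis unfolding gF_def[abs_def] HF_def[abs_def] by simp
qed

lemma F_quadratic_lower: "a \<in> K \<Longrightarrow> b \<in> K \<Longrightarrow> F a + gF a \<bullet> (b - a) + mu / 2 * (norm (b - a))\<^sup>2 \<le> F b"
  by (rule quadratic_lower_bound[OF K_convex]) (use F_has_derivative gF_has_derivative K_sub_O HF_bounds in auto)

lemma F_quadratic_upper: "a \<in> K \<Longrightarrow> b \<in> K \<Longrightarrow> F b \<le> F a + gF a \<bullet> (b - a) + L / 2 * (norm (b - a))\<^sup>2"
  by (rule quadratic_upper_bound[OF K_convex]) (use F_has_derivative gF_has_derivative K_sub_O HF_bounds in auto)

lemma Hf_nonneg: "i < m \<Longrightarrow> x \<in> Oset \<Longrightarrow> Hf i x h \<bullet> h \<ge> 0"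
  by (rule convex_on_second_derivative_nonneg[OF O_open _ f_convex f_grad f_hess]) auto

lemma Hf_symmetric: "i < m \<Longrightarrow> x \<in> Oset \<Longrightarrow> Hf i x h \<bullet> k = Hf i x k \<bullet> h"
  by (rule second_derivative_symmetric[OF O_open _ f_grad f_hess]) auto

definition Lf where "Lf = real m * L"

lemma Lf_pos: "Lf > 0" using L_pos m_pos by (simp add: Lf_def)

lemma norm_Hf_le: assumes i: "i < m" and x: "x \<in> K" shows "norm (Hf i x h) \<le> Lf * norm h"
proof (rule symmetric_nonneg_operator_norm_le)
  have xO: "x \<in> Oset" using x by (rule in_O)
  show "linear (Hf i x)" using f_hess[OF i xO] has_derivative_linear by blast
  show "\<And>u v. Hf i x u \<bullet> v = Hf i x v \<bullet> u" using Hf_symmetric[OF i xO] by blast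
  show "\<And>u. 0 \<le> Hf i x u \<bullet> u" using Hf_nonneg[OF i xO] by blast
  fix u
  have "Hf i x u \<bullet> u \<le> (\<Sum>k<m. Hf k x u \<bullet> u)"
    by (rule member_le_sum) (use i Hf_nonneg xO in auto)
  also have "\<dots> = real m * (HF x u \<bullet> u)" using m_pos by (simp add: HF_def inner_sum_left)
  also have "\<dots> \<le> real m * (L * (norm u)\<^sup>2)" using HF_bounds(2)[OF x] by (simp add: mult_left_mono)
  finally show "Hf i x u \<bullet> u \<le> Lf * (norm u)\<^sup>2" by (simp add: Lf_def)
qed

lemma gf_lipschitz: "i < m \<Longrightarrow> a \<in> K \<Longrightarrow> b \<in> K \<Longrightarrow> norm (gf i a - gf i b) \<le> Lf * norm (a - b)"
proof -
  assume i: "i < m" and a: "a \<in> K" and b: "b \<in> K"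
  show ?thesis
  proof (rule differentiable_bound[OF K_convex _ _ a b])
    fix x assume x: "x \<in> K"
    then have xO: "x \<in> Oset" by (rule in_O)
    show "(gf i has_derivative Hf i x) (at x within K)"
      using f_hess[OF i xO] by (rule has_derivative_at_withinI)
    show "onorm (Hf i x) \<le> Lf"
    proof (rule onorm_le)
      fix h show "norm (Hf i x h) \<le> Lf * norm h" by (rule norm_Hf_le[OF i x])
    qed
  qed
qed

lemma U_convex: "convex_on K U"
proof -
  have "convex_on K (\<lambda>x. \<Sum>i<n. f i x)" if "n \<le> m" for n
    using that
  proof (induction n)
    case 0 then show ?case using K_convex by (simp add: convex_on_const)
  next
    case (Suc n)
    have "convex_on K (f n)" using f_convex[of n] Suc.prems K_sub_O K_convex convex_on_subset by auto
    then show ?case using Suc by (simp add: convex_on_add)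
  qed
  then have "convex_on K (\<lambda>x. (1 / real m) * (\<Sum>i<m. f i x))" by (intro convex_on_cmul) auto
  then show ?thesis unfolding U_def[abs_def] using G_convex by (rule convex_on_add)
qed

lemma ft_quadratic_upper:
  assumes i: "i < m" and x: "x \<in> K" and a: "a \<in> K" and b: "b \<in> K"
  shows "ft i b x \<le> ft i a x + gft i a x \<bullet> (b - a) + (L + Du i) / 2 * (norm (b - a))\<^sup>2"
proof (rule quadratic_upper_bound[OF K_convex _ _ _ a b, where g = "\<lambda>u. gft i u x" and H = "\<lambda>u. Hft i u x"])
  fix u assume u: "u \<in> K"
  show "((\<lambda>u. ft i u x) has_derivative (\<lambda>v. gft i u x \<bullet> v)) (at u)"
    using ft_grad[OF i in_O[OF u] in_O[OF x]] .
  show "((\<lambda>u. gft i u x) has_derivative Hft i u x) (at u)"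
    using ft_hess[OF i in_O[OF u] in_O[OF x]] .
  fix h
  have "(Hft i u x h - HF u h) \<bullet> h \<le> Du i * (norm h)\<^sup>2"
    using D_upper[OF i u x, of h] unfolding HF_def .
  moreover have "HF u h \<bullet> h \<le> L * (norm h)\<^sup>2" using HF_bounds(2)[OF u] .
  ultimately show "Hft i u x h \<bullet> h \<le> (L + Du i) * (norm h)\<^sup>2"
    by (simp add: inner_diff_left algebra_simps)
qed

lemma ft_strongly_convex_ineq:
  assumes i: "i < m" and x: "x \<in> K" and a: "a \<in> K" and b: "b \<in> K"
  shows "ft i a x + gft i a x \<bullet> (b - a) + mut i / 2 * (norm (b - a))\<^sup>2 \<le> ft i b x"
  by (rule strongly_convex_on_gradient_ineq[OF ft_strongly_convex[OF i x] _ a b])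
     (use ft_grad[OF i in_O in_O[OF x]] in blast)

lemma c_nonneg: "i < m \<Longrightarrow> j < m \<Longrightarrow> c \<nu> i j \<ge> 0"
  using c_diag c_edge c_zero c_l_pos by (cases "j = i"; cases "(j, i) \<in> E \<nu>") (auto intro: order_trans[OF less_imp_le])

lemma c_l_le1: "c_l \<le> 1"
proof -
  have "c 0 0 0 \<le> (\<Sum>i<m. c 0 i 0)"
    by (rule member_le_sum) (use m_pos c_nonneg in auto)
  also have "\<dots> = 1" using c_colstoch m_pos by simp
  finally show ?thesis using c_diag[of 0 0] m_pos by simp
qed

text \<open>Products of \<open>T\<close> consecutive weight matrices have all entries positive. Then \<open>eta\<close> bounds the
  push-sum weights \<open>phi\<close> from below, \<open>wmin\<close> the nonzero entries of the reweighted matrices \<open>W\<close>,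
  \<open>delta\<close> the entries of products of \<open>T\<close> consecutive \<open>W\<close>, and \<open>rho\<close> is the resulting
  contraction factor of disagreements over such a window.\<close>

definition T where "T = m * B"
definition eta where "eta = c_l ^ T"
definition wmin where "wmin = c_l * eta / real m"
definition delta where "delta = wmin ^ T"
definition rho where "rho = 1 - real m * delta"

lemma T_pos: "T > 0" using m_pos B_pos by (simp add: T_def)
lemma eta_pos: "eta > 0" using c_l_pos by (simp add: eta_def)
lemma wmin_pos: "wmin > 0" using c_l_pos eta_pos m_pos by (simp add: wmin_def)
lemma delta_pos: "delta > 0" using wmin_pos by (simp add: delta_def)

lemma wprod_c_ge_eta:
  assumes "i < m" "j < m"
  shows "eta \<le> wprod c m s T i j"
proof -
  interpret positive_weights m c E c_l
    using c_nonneg c_diag c_edge c_l_pos by unfold_locales auto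
  show ?thesis unfolding T_def eta_def by (rule wprod_ge_pow[OF m_pos B_pos B_conn assms])
qed

text \<open>\<open>tau\<close> weights the test point \<open>x + tau (w - x)\<close> in \<open>surrogate_step_descent\<close>; it is small
  enough for the surrogate curvature \<open>L + Du i\<close> to be dominated by \<open>mu / 2\<close>.\<close>

definition tau where "tau = mu / (2 * (mu + (\<Sum>i<m. \<bar>L + Du i\<bar>)))"
definition mut_min where "mut_min = Min (mut ` {..<m})"

lemma tau_pos: "tau > 0" and tau_le1: "tau \<le> 1"
proof -
  have S: "0 \<le> (\<Sum>i<m. \<bar>L + Du i\<bar>)" by (simp add: sum_nonneg)
  show "tau > 0" unfolding tau_def using mu_pos S by (simp add: add_pos_nonneg)
  show "tau \<le> 1" unfolding tau_def using mu_pos S by (simp add: divide_le_eq)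
qed

lemma curvature_tau_le:
  assumes i: "i < m"
  shows "(L + Du i) * tau \<le> mu / 2"
proof -
  define S where "S = (\<Sum>i<m. \<bar>L + Du i\<bar>)"
  have "L + Du i \<le> S" unfolding S_def
    using member_le_sum[of i "{..<m}" "\<lambda>i. \<bar>L + Du i\<bar>"] i by (simp add: abs_le_iff)
  moreover have "S \<ge> 0" by (simp add: S_def sum_nonneg)
  ultimately have "(L + Du i) * tau \<le> (mu + S) * tau" using tau_pos mu_pos by (intro mult_right_mono) auto
  also have "\<dots> = mu / 2"
    using mu_pos \<open>S \<ge> 0\<close> by (simp add: tau_def flip: S_def) (simp add: field_simps)
  finally show ?thesis .
qed

lemma mut_min_le: "i < m \<Longrightarrow> mut_min \<le> mut i"
  unfolding mut_min_def by (rule Min_le) auto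

lemma mut_min_pos: "mut_min > 0"
proof -
  have "mut_min \<in> mut ` {..<m}" unfolding mut_min_def using m_pos by (intro Min_in) (auto simp: lessThan_empty_iff)
  then show ?thesis using mut_pos by auto
qed

end

section \<open>The SONATA iteration\<close>

locale sonata_run = sonata_problem +
  fixes alpha :: real
    and x xhalf xhat y :: "nat \<Rightarrow> nat \<Rightarrow> 'a"
    and phi :: "nat \<Rightarrow> nat \<Rightarrow> real"
  assumes alpha_pos: "0 < alpha" and alpha_le1: "alpha \<le> 1"
    and x_init: "\<And>i. i < m \<Longrightarrow> x i 0 \<in> K"
    and y_init: "\<And>i. i < m \<Longrightarrow> y i 0 = gf i (x i 0)"
    and phi_init: "\<And>i. i < m \<Longrightarrow> phi i 0 = 1"
    and xhat_in_K: "\<And>i \<nu>. i < m \<Longrightarrow> xhat i \<nu> \<in> K"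
    and xhat_opt: "\<And>i \<nu> z. i < m \<Longrightarrow> z \<in> K \<Longrightarrow>
          ft i (xhat i \<nu>) (x i \<nu>) + (y i \<nu> - gf i (x i \<nu>)) \<bullet> (xhat i \<nu> - x i \<nu>) + G (xhat i \<nu>)
                 \<le> ft i z (x i \<nu>) + (y i \<nu> - gf i (x i \<nu>)) \<bullet> (z - x i \<nu>) + G z"
    and xhalf_eq: "\<And>i \<nu>. i < m \<Longrightarrow> xhalf i \<nu> = x i \<nu> + alpha *\<^sub>R (xhat i \<nu> - x i \<nu>)"
    and phi_update: "\<And>i \<nu>. i < m \<Longrightarrow> phi i (Suc \<nu>) = (\<Sum>j<m. c \<nu> i j * phi j \<nu>)"
    and x_update: "\<And>i \<nu>. i < m \<Longrightarrow> x i (Suc \<nu>) = (1 / phi i (Suc \<nu>)) *\<^sub>R (\<Sum>j<m. (c \<nu> i j * phi j \<nu>) *\<^sub>R xhalf j \<nu>)"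
    and y_update: "\<And>i \<nu>. i < m \<Longrightarrow> y i (Suc \<nu>) = (1 / phi i (Suc \<nu>)) *\<^sub>R
          (\<Sum>j<m. c \<nu> i j *\<^sub>R (phi j \<nu> *\<^sub>R y j \<nu> + gf j (x j (Suc \<nu>)) - gf j (x j \<nu>)))"
begin

lemma phi_nonneg: "i < m \<Longrightarrow> phi i \<nu> \<ge> 0"
proof (induction \<nu> arbitrary: i)
  case 0 then show ?case using phi_init by simp
next
  case (Suc \<nu>) then show ?case using phi_update c_nonneg by (auto intro!: sum_nonneg mult_nonneg_nonneg)
qed

lemma phi_sum: "(\<Sum>i<m. phi i \<nu>) = real m"
proof (induction \<nu>)
  case 0 then show ?case using phi_init by simp
next
  case (Suc \<nu>)
  have "(\<Sum>i<m. phi i (Suc \<nu>)) = (\<Sum>i<m. \<Sum>j<m. c \<nu> i j * phi j \<nu>)" using phi_update by simp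
  also have "\<dots> = (\<Sum>j<m. \<Sum>i<m. c \<nu> i j * phi j \<nu>)" by (rule sum.swap)
  also have "\<dots> = (\<Sum>j<m. (\<Sum>i<m. c \<nu> i j) * phi j \<nu>)" by (simp add: sum_distrib_right)
  also have "\<dots> = (\<Sum>j<m. phi j \<nu>)" using c_colstoch by simp
  finally show ?case using Suc by simp
qed

lemma phi_le: "i < m \<Longrightarrow> phi i \<nu> \<le> real m"
proof -
  assume i: "i < m"
  have "phi i \<nu> \<le> (\<Sum>i<m. phi i \<nu>)" by (rule member_le_sum) (use i phi_nonneg in auto)
  then show ?thesis using phi_sum by simp
qed

lemma phi_wprod: "i < m \<Longrightarrow> phi i (s + n) = (\<Sum>j<m. wprod c m s n i j * phi j s)"
proof (induction n arbitrary: i)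
  case 0
  have "(\<Sum>j<m. (if i = j then 1 else 0) * phi j s) = (\<Sum>j<m. if i = j then phi j s else 0)"
    by (rule sum.cong) auto
  then show ?case using 0 by simp
next
  case (Suc n)
  have "phi i (s + Suc n) = (\<Sum>l<m. c (s + n) i l * phi l (s + n))" using phi_update[OF Suc.prems] by simp
  also have "\<dots> = (\<Sum>l<m. c (s + n) i l * (\<Sum>j<m. wprod c m s n l j * phi j s))" using Suc.IH by simp
  also have "\<dots> = (\<Sum>l<m. \<Sum>j<m. c (s + n) i l * wprod c m s n l j * phi j s)"
    by (simp add: sum_distrib_left mult.assoc)
  also have "\<dots> = (\<Sum>j<m. \<Sum>l<m. c (s + n) i l * wprod c m s n l j * phi j s)" by (rule sum.swap)
  also have "\<dots> = (\<Sum>j<m. wprod c m s (Suc n) i j * phi j s)" by (simp add: sum_distrib_right)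
  finally show ?case .
qed

lemma phi_ge_pow: "i < m \<Longrightarrow> phi i \<nu> \<ge> c_l ^ \<nu>"
proof (induction \<nu> arbitrary: i)
  case 0 then show ?case using phi_init by simp
next
  case (Suc \<nu>)
  have "c \<nu> i i * phi i \<nu> \<le> (\<Sum>j<m. c \<nu> i j * phi j \<nu>)"
    by (rule member_le_sum[of i "{..<m}" "\<lambda>j. c \<nu> i j * phi j \<nu>"]) (use Suc.prems c_nonneg phi_nonneg in auto)
  moreover have "c_l * c_l ^ \<nu> \<le> c \<nu> i i * phi i \<nu>"
    using c_diag[OF Suc.prems, of \<nu>] Suc.IH[OF Suc.prems] c_l_pos by (intro mult_mono) auto
  ultimately show ?case using phi_update[OF Suc.prems] by simp
qed

lemma phi_ge_eta: "i < m \<Longrightarrow> phi i \<nu> \<ge> eta"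
proof -
  assume i: "i < m"
  show ?thesis
  proof (cases "\<nu> \<le> T")
    case True
    have "eta \<le> c_l ^ \<nu>" unfolding eta_def using True c_l_pos c_l_le1 by (intro power_decreasing) auto
    then show ?thesis using phi_ge_pow[OF i, of \<nu>] by simp
  next
    case False
    then obtain s where s: "\<nu> = s + T" by (metis add.commute le_add_diff_inverse nat_le_linear)
    have "(\<Sum>j<m. eta * phi j s) \<le> (\<Sum>j<m. wprod c m s T i j * phi j s)"
      by (intro sum_mono mult_right_mono) (use wprod_c_ge_eta[OF i] phi_nonneg in auto)
    also have "\<dots> = phi i \<nu>" using phi_wprod[OF i] s by simp
    finally have "eta * real m \<le> phi i \<nu>" by (simp add: sum_distrib_left[symmetric] phi_sum)
    moreover have "eta \<le> eta * real m" using eta_pos m_pos by simp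
    ultimately show ?thesis by simp
  qed
qed

lemma phi_pos: "i < m \<Longrightarrow> phi i \<nu> > 0" using phi_ge_eta eta_pos by (meson less_le_trans)

definition W where "W k i j = c k i j * phi j k / phi i (Suc k)"

lemma W_nonneg: "i < m \<Longrightarrow> j < m \<Longrightarrow> W k i j \<ge> 0"
  unfolding W_def using c_nonneg phi_nonneg phi_pos by (simp add: divide_nonneg_pos)

lemma W_row_sum: "i < m \<Longrightarrow> (\<Sum>j<m. W k i j) = 1"
proof -
  assume i: "i < m"
  have "(\<Sum>j<m. W k i j) = (\<Sum>j<m. c k i j * phi j k) / phi i (Suc k)"
    unfolding W_def by (simp add: sum_divide_distrib)
  also have "\<dots> = 1" using phi_update[OF i, of k] phi_pos[OF i, of "Suc k"] by simp
  finally show ?thesis .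
qed

lemma W_ge_wmin: assumes i: "i < m" and j: "j < m" and cj: "c k i j \<ge> c_l" shows "W k i j \<ge> wmin"
proof -
  have "c_l * eta \<le> c k i j * phi j k" using cj phi_ge_eta[OF j] c_l_pos eta_pos by (intro mult_mono) auto
  moreover have "phi i (Suc k) \<le> real m" by (rule phi_le[OF i])
  moreover have "phi i (Suc k) > 0" by (rule phi_pos[OF i])
  moreover have "c_l * eta \<ge> 0" using c_l_pos eta_pos by simp
  ultimately have "c_l * eta / real m \<le> c k i j * phi j k / phi i (Suc k)"
    by (meson frac_le order.trans order_refl)
  then show ?thesis by (simp add: W_def wmin_def)
qed

lemma wprod_W_ge_delta:
  assumes "i < m" "j < m"
  shows "delta \<le> wprod W m s T i j"
proof -
  interpret positive_weights m W E wmin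
    using W_nonneg W_ge_wmin c_diag c_edge wmin_pos by unfold_locales auto
  show ?thesis unfolding T_def delta_def by (rule wprod_ge_pow[OF m_pos B_pos B_conn assms])
qed

lemma m_delta_le_1: "real m * delta \<le> 1"
proof -
  have z: "0 < m" using m_pos by simp
  have "(\<Sum>j<m. delta) \<le> (\<Sum>j<m. wprod W m 0 T 0 j)" by (intro sum_mono) (use wprod_W_ge_delta z in auto)
  also have "\<dots> = 1" by (rule wprod_row_sum[OF W_row_sum z])
  finally show ?thesis by simp
qed

lemma rho_nonneg: "rho \<ge> 0" using m_delta_le_1 by (simp add: rho_def)

lemma x_update_W: "i < m \<Longrightarrow> x i (Suc k) = (\<Sum>j<m. W k i j *\<^sub>R (x j k + alpha *\<^sub>R (xhat j k - x j k)))"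
proof -
  assume i: "i < m"
  have "x i (Suc k) = (\<Sum>j<m. (1 / phi i (Suc k)) *\<^sub>R ((c k i j * phi j k) *\<^sub>R xhalf j k))"
    using x_update[OF i] by (simp add: scaleR_sum_right)
  also have "\<dots> = (\<Sum>j<m. W k i j *\<^sub>R (x j k + alpha *\<^sub>R (xhat j k - x j k)))"
    by (rule sum.cong) (auto simp: W_def xhalf_eq)
  finally show ?thesis .
qed

lemma y_update_W: "i < m \<Longrightarrow> y i (Suc k) =
   (\<Sum>j<m. W k i j *\<^sub>R (y j k + (1 / phi j k) *\<^sub>R (gf j (x j (Suc k)) - gf j (x j k))))"
proof -
  assume i: "i < m"
  have "y i (Suc k) = (\<Sum>j<m. (1 / phi i (Suc k)) *\<^sub>R (c k i j *\<^sub>R (phi j k *\<^sub>R y j k + gf j (x j (Suc k)) - gf j (x j k))))"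
    using y_update[OF i] by (simp add: scaleR_sum_right)
  also have "\<dots> = (\<Sum>j<m. W k i j *\<^sub>R (y j k + (1 / phi j k) *\<^sub>R (gf j (x j (Suc k)) - gf j (x j k))))"
  proof (rule sum.cong)
    fix j assume j: "j \<in> {..<m}"
    have pj: "phi j k \<noteq> 0" using phi_pos[of j k] j by simp
    have "phi j k *\<^sub>R y j k + gf j (x j (Suc k)) - gf j (x j k)
        = phi j k *\<^sub>R (y j k + (1 / phi j k) *\<^sub>R (gf j (x j (Suc k)) - gf j (x j k)))"
      using pj by (simp add: scaleR_add_right)
    then show "(1 / phi i (Suc k)) *\<^sub>R (c k i j *\<^sub>R (phi j k *\<^sub>R y j k + gf j (x j (Suc k)) - gf j (x j k)))
        = W k i j *\<^sub>R (y j k + (1 / phi j k) *\<^sub>R (gf j (x j (Suc k)) - gf j (x j k)))"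
      by (simp add: W_def)
  qed simp
  finally show ?thesis .
qed

lemma x_in_K: "i < m \<Longrightarrow> x i \<nu> \<in> K" and xhalf_in_K: "i < m \<Longrightarrow> xhalf i \<nu> \<in> K"
proof -
  have xh: "xhalf i \<nu> \<in> K" if "i < m" "x i \<nu> \<in> K" for i \<nu>
  proof -
    have "xhalf i \<nu> = (1 - alpha) *\<^sub>R x i \<nu> + alpha *\<^sub>R xhat i \<nu>"
      using xhalf_eq[OF that(1)] by (simp add: algebra_simps)
    then show ?thesis using K_convex that xhat_in_K alpha_pos alpha_le1 by (simp add: convex_def)
  qed
  have x: "x i \<nu> \<in> K" if "i < m" for i
    using that
  proof (induction \<nu> arbitrary: i)
    case 0 then show ?case using x_init by simp
  next
    case (Suc \<nu>)
    have "x i (Suc \<nu>) = (\<Sum>j<m. W \<nu> i j *\<^sub>R xhalf j \<nu>)"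
      using x_update_W[OF Suc.prems] xhalf_eq by simp
    also have "\<dots> \<in> K"
      by (rule convex_sum) (use K_convex W_row_sum[OF Suc.prems] W_nonneg Suc.prems xh Suc.IH in auto)
    finally show ?case .
  qed
  show "i < m \<Longrightarrow> x i \<nu> \<in> K" by (rule x)
  show "i < m \<Longrightarrow> xhalf i \<nu> \<in> K" using x xh by blast
qed

lemma tracking_sum: "(\<Sum>i<m. phi i k *\<^sub>R y i k) = (\<Sum>i<m. gf i (x i k))"
proof (induction k)
  case 0 then show ?case using phi_init y_init by simp
next
  case (Suc k)
  have "(\<Sum>i<m. phi i (Suc k) *\<^sub>R y i (Suc k))
      = (\<Sum>i<m. \<Sum>j<m. c k i j *\<^sub>R (phi j k *\<^sub>R y j k + gf j (x j (Suc k)) - gf j (x j k)))"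
  proof (rule sum.cong)
    fix i assume i: "i \<in> {..<m}"
    have "phi i (Suc k) \<noteq> 0" using phi_pos[of i "Suc k"] i by simp
    then show "phi i (Suc k) *\<^sub>R y i (Suc k) = (\<Sum>j<m. c k i j *\<^sub>R (phi j k *\<^sub>R y j k + gf j (x j (Suc k)) - gf j (x j k)))"
      using y_update i by simp
  qed simp
  also have "\<dots> = (\<Sum>j<m. \<Sum>i<m. c k i j *\<^sub>R (phi j k *\<^sub>R y j k + gf j (x j (Suc k)) - gf j (x j k)))"
    by (rule sum.swap)
  also have "\<dots> = (\<Sum>j<m. (phi j k *\<^sub>R y j k + gf j (x j (Suc k)) - gf j (x j k)))"
    by (simp add: scaleR_sum_left[symmetric] c_colstoch)
  also have "\<dots> = (\<Sum>j<m. phi j k *\<^sub>R y j k) + (\<Sum>j<m. gf j (x j (Suc k))) - (\<Sum>j<m. gf j (x j k))"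
    by (simp add: sum.distrib sum_subtractf)
  finally show ?case using Suc by simp
qed

end
context sonata_run
begin

text \<open>Optimality of \<open>xhat\<close> against the test point \<open>x + tau (w - x)\<close>: the surrogate's strong convexity
  and curvature bound, the strong convexity of \<open>F\<close>, and Young's inequality for the tracking error
  \<open>e = y - gF x\<close> give a descent estimate for the direction \<open>d = xhat - x\<close>.\<close>

lemma surrogate_step_descent:
  assumes j: "j < m" and w: "w \<in> K"
  shows "gF (x j k) \<bullet> (xhat j k - x j k) + G (xhat j k) - G (x j k)
    \<le> tau * (U w - U (x j k)) - mut j / 4 * (norm (xhat j k - x j k))\<^sup>2
      + (1 / mu + 1 / mut j) * (norm (y j k - gF (x j k)))\<^sup>2"
proof -
  define xk xh where "xk = x j k" and "xh = xhat j k"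
  define d e where "d = xh - xk" and "e = y j k - gF xk"
  define wt where "wt = xk + tau *\<^sub>R (w - xk)"
  define g N where "g = gf j xk" and "N = (norm (w - xk))\<^sup>2"
  have xk: "xk \<in> K" and xh: "xh \<in> K" using x_in_K xhat_in_K j by (simp_all add: xk_def xh_def)
  have wt_eq: "wt = (1 - tau) *\<^sub>R xk + tau *\<^sub>R w" by (simp add: wt_def algebra_simps)
  have wt: "wt \<in> K" unfolding wt_eq using K_convex xk w tau_pos tau_le1 by (simp add: convex_def)
  have g: "gft j xk xk = g" using ft_grad_consistent[OF j in_O[OF xk]] by (simp add: g_def)
  have "ft j xh xk + (y j k - g) \<bullet> d + G xh \<le> ft j wt xk + (y j k - g) \<bullet> (wt - xk) + G wt"
    using xhat_opt[OF j wt, of k] by (simp add: xk_def xh_def d_def g_def)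
  moreover have "ft j xk xk + g \<bullet> d + mut j / 2 * (norm d)\<^sup>2 \<le> ft j xh xk"
    using ft_strongly_convex_ineq[OF j xk xk xh] g by (simp add: d_def)
  moreover have "ft j wt xk \<le> ft j xk xk + g \<bullet> (wt - xk) + (L + Du j) / 2 * (norm (wt - xk))\<^sup>2"
    using ft_quadratic_upper[OF j xk xk wt] g by simp
  moreover have "(norm (wt - xk))\<^sup>2 = tau\<^sup>2 * N" using tau_pos by (simp add: wt_def N_def power_mult_distrib)
  ultimately have opt: "gF xk \<bullet> d + e \<bullet> d + G xh + mut j / 2 * (norm d)\<^sup>2
      \<le> tau * (gF xk \<bullet> (w - xk)) + tau * (e \<bullet> (w - xk)) + (L + Du j) / 2 * tau\<^sup>2 * N + G wt"
    by (simp add: e_def wt_def inner_diff_left inner_diff_right algebra_simps)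
  have curv: "(L + Du j) / 2 * tau\<^sup>2 * N \<le> mu / 4 * tau * N"
    using mult_right_mono[OF curvature_tau_le[OF j], of "tau * N"] tau_pos
    by (simp add: N_def power2_eq_square algebra_simps)
  have G: "G wt \<le> (1 - tau) * G xk + tau * G w"
    unfolding wt_eq using convex_onD[OF G_convex, of tau xk w] tau_pos tau_le1 xk w by simp
  have F: "tau * F xk + tau * (gF xk \<bullet> (w - xk)) + mu / 2 * tau * N \<le> tau * F w"
    using mult_left_mono[OF F_quadratic_lower[OF xk w], of tau] tau_pos
    by (simp add: N_def algebra_simps)
  have e1: "tau * (e \<bullet> (w - xk)) \<le> mu / 4 * tau * N + tau * (norm e)\<^sup>2 / mu"
    using mult_left_mono[OF inner_le_weighted_norms[OF mu_pos, of e "w - xk"], of tau] tau_pos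
    by (simp add: N_def algebra_simps)
  have e2: "- (e \<bullet> d) \<le> mut j / 4 * (norm d)\<^sup>2 + (norm e)\<^sup>2 / mut j"
    using inner_le_weighted_norms[OF mut_pos[OF j], of "- e" d] by simp
  have e3: "tau * (norm e)\<^sup>2 / mu \<le> (norm e)\<^sup>2 / mu"
    using mult_right_mono[OF tau_le1, of "(norm e)\<^sup>2"] mu_pos by (simp add: divide_right_mono)
  have "gF xk \<bullet> d + G xh - G xk \<le> tau * (U w - U xk) - mut j / 4 * (norm d)\<^sup>2 + (1 / mu + 1 / mut j) * (norm e)\<^sup>2"
    using opt curv G F e1 e2 e3 by (simp add: U_eq algebra_simps add_divide_distrib)
  then show ?thesis by (simp add: xk_def xh_def d_def e_def)
qed

definition Ustar where "Ustar = Inf (U ` K)"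
definition xdiam where "xdiam k = diam m (\<lambda>i. x i k)"
definition ydiam where "ydiam k = diam m (\<lambda>i. y i k)"
definition dmax where "dmax k = Max ((\<lambda>j. norm (xhat j k - x j k)) ` {..<m})"

definition lyap where "lyap k = (\<Sum>i<m. (phi i k / real m) * (U (x i k) - Ustar))"

lemma xdiam_ge: "i < m \<Longrightarrow> j < m \<Longrightarrow> norm (x i k - x j k) \<le> xdiam k"
  unfolding xdiam_def by (rule diam_ge)

lemma ydiam_ge: "i < m \<Longrightarrow> j < m \<Longrightarrow> norm (y i k - y j k) \<le> ydiam k"
  unfolding ydiam_def by (rule diam_ge)

lemma xdiam_nonneg: "xdiam k \<ge> 0"
  unfolding xdiam_def by (rule diam_nonneg[OF m_pos])

lemma ydiam_nonneg: "ydiam k \<ge> 0"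
  unfolding ydiam_def by (rule diam_nonneg[OF m_pos])

lemma dmax_ge: "j < m \<Longrightarrow> norm (xhat j k - x j k) \<le> dmax k"
  unfolding dmax_def by (rule Max_ge) auto

lemma dmax_attained: "\<exists>j<m. dmax k = norm (xhat j k - x j k)"
proof -
  have "dmax k \<in> (\<lambda>j. norm (xhat j k - x j k)) ` {..<m}"
    unfolding dmax_def using m_pos by (intro Max_in) (auto simp: lessThan_empty_iff)
  then show ?thesis by auto
qed

definition ybar where "ybar k = (1 / real m) *\<^sub>R (\<Sum>i<m. phi i k *\<^sub>R y i k)"

lemma norm_y_minus_ybar_le:
  assumes j: "j < m"
  shows "norm (y j k - ybar k) \<le> ydiam k"
proof -
  have m: "real m > 0" using m_pos by simp
  have "(\<Sum>i<m. phi i k *\<^sub>R (y j k - y i k)) = (\<Sum>i<m. phi i k) *\<^sub>R y j k - (\<Sum>i<m. phi i k *\<^sub>R y i k)"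
    by (simp add: scaleR_diff_right sum_subtractf scaleR_sum_left)
  then have "y j k - ybar k = (1 / real m) *\<^sub>R (\<Sum>i<m. phi i k *\<^sub>R (y j k - y i k))"
    using m by (simp add: ybar_def phi_sum scaleR_diff_right)
  then have "norm (y j k - ybar k) = (1 / real m) * norm (\<Sum>i<m. phi i k *\<^sub>R (y j k - y i k))"
    using m by simp
  also have "\<dots> \<le> (1 / real m) * (\<Sum>i<m. norm (phi i k *\<^sub>R (y j k - y i k)))"
    by (intro mult_left_mono norm_sum) (use m in simp)
  also have "\<dots> \<le> (1 / real m) * (\<Sum>i<m. phi i k * ydiam k)"
    using m phi_nonneg j by (intro mult_left_mono sum_mono) (auto intro!: mult_left_mono ydiam_ge)
  also have "\<dots> = ydiam k" using m by (simp add: sum_distrib_right[symmetric] phi_sum)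
  finally show ?thesis .
qed

lemma norm_ybar_minus_gF_le:
  assumes j: "j < m"
  shows "norm (ybar k - gF (x j k)) \<le> Lf * xdiam k"
proof -
  have m: "real m > 0" using m_pos by simp
  have "ybar k - gF (x j k) = (1 / real m) *\<^sub>R (\<Sum>i<m. gf i (x i k) - gf i (x j k))"
    by (simp add: ybar_def tracking_sum gF_def sum_subtractf scaleR_diff_right)
  then have "norm (ybar k - gF (x j k)) \<le> (1 / real m) * (\<Sum>i<m. norm (gf i (x i k) - gf i (x j k)))"
    using m by (simp add: norm_sum divide_right_mono)
  also have "\<dots> \<le> (1 / real m) * (\<Sum>i<m. Lf * xdiam k)"
  proof (intro mult_left_mono sum_mono)
    fix i assume i: "i \<in> {..<m}"
    have "norm (gf i (x i k) - gf i (x j k)) \<le> Lf * norm (x i k - x j k)"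
      using gf_lipschitz i x_in_K j by auto
    also have "\<dots> \<le> Lf * xdiam k" using Lf_pos i j by (intro mult_left_mono xdiam_ge) auto
    finally show "norm (gf i (x i k) - gf i (x j k)) \<le> Lf * xdiam k" .
  qed (use m in simp)
  also have "\<dots> = Lf * xdiam k" using m by simp
  finally show ?thesis .
qed

lemma tracking_error_le:
  assumes j: "j < m"
  shows "norm (y j k - gF (x j k)) \<le> ydiam k + Lf * xdiam k"
  using norm_triangle_ineq[of "y j k - ybar k" "ybar k - gF (x j k)"]
    norm_y_minus_ybar_le[OF j, of k] norm_ybar_minus_gF_le[OF j, of k] by simp


lemma xdiam_bound:
  assumes lb: "\<And>i j. i < m \<Longrightarrow> j < m \<Longrightarrow> \<delta> \<le> wprod W m s n i j"
  shows "xdiam (s + n) \<le> (1 - real m * \<delta>) * xdiam s + 2 * (\<Sum>k<n. alpha * dmax (s + k))"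
  unfolding xdiam_def
proof (rule diam_perturbed_averaging[OF m_pos W_nonneg W_row_sum x_update_W _ lb])
  fix k j assume j: "j < m"
  show "norm (alpha *\<^sub>R (xhat j k - x j k)) \<le> alpha * dmax k"
    using dmax_ge[OF j, of k] alpha_pos by (simp add: mult_left_mono)
qed

lemma xdiam_growth: "xdiam n \<le> xdiam 0 + 2 * (\<Sum>k<n. alpha * dmax k)"
  using xdiam_bound[where s = 0 and n = n and \<delta> = 0] wprod_nonneg[of m W, OF W_nonneg] by simp

lemma xdiam_window: "xdiam (s + T) \<le> rho * xdiam s + 2 * (\<Sum>k<T. alpha * dmax (s + k))"
  using xdiam_bound[where s = s and n = T and \<delta> = delta] wprod_W_ge_delta by (simp add: rho_def)

lemma norm_x_Suc_diff_le:
  assumes j: "j < m"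
  shows "norm (x j (Suc k) - x j k) \<le> xdiam k + alpha * dmax k"
proof -
  define v where "v l = (x l k - x j k) + alpha *\<^sub>R (xhat l k - x l k)" for l
  have "(\<Sum>l<m. W k j l *\<^sub>R v l)
      = (\<Sum>l<m. W k j l *\<^sub>R (x l k + alpha *\<^sub>R (xhat l k - x l k))) - (\<Sum>l<m. W k j l *\<^sub>R x j k)"
    by (simp add: v_def sum_subtractf[symmetric] algebra_simps)
  also have "(\<Sum>l<m. W k j l *\<^sub>R x j k) = (\<Sum>l<m. W k j l) *\<^sub>R x j k"
    by (rule scaleR_sum_left[symmetric])
  finally have "(\<Sum>l<m. W k j l *\<^sub>R v l)
      = (\<Sum>l<m. W k j l *\<^sub>R (x l k + alpha *\<^sub>R (xhat l k - x l k))) - (\<Sum>l<m. W k j l) *\<^sub>R x j k" .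
  then have "x j (Suc k) - x j k = (\<Sum>l<m. W k j l *\<^sub>R v l)"
    using x_update_W[OF j, of k] W_row_sum[OF j, of k] by simp
  then have "norm (x j (Suc k) - x j k) \<le> (\<Sum>l<m. norm (W k j l *\<^sub>R v l))"
    by (simp only: norm_sum)
  also have "\<dots> \<le> (\<Sum>l<m. W k j l * (xdiam k + alpha * dmax k))"
  proof (rule sum_mono)
    fix l assume l: "l \<in> {..<m}"
    have "norm (v l) \<le> xdiam k + alpha * dmax k"
      using norm_triangle_ineq[of "x l k - x j k" "alpha *\<^sub>R (xhat l k - x l k)"]
        xdiam_ge[of l j k] dmax_ge[of l k] l j alpha_pos
      by (auto simp: v_def intro: order_trans[OF _ add_mono] mult_left_mono)
    then show "norm (W k j l *\<^sub>R v l) \<le> W k j l * (xdiam k + alpha * dmax k)"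
      using W_nonneg[OF j, of l k] l by (simp add: mult_left_mono)
  qed
  also have "\<dots> = xdiam k + alpha * dmax k" using W_row_sum[OF j, of k] by (simp add: sum_distrib_right[symmetric])
  finally show ?thesis .
qed

definition ydrift where "ydrift k = Lf / eta * (xdiam k + alpha * dmax k)"

lemma ydiam_bound:
  assumes lb: "\<And>i j. i < m \<Longrightarrow> j < m \<Longrightarrow> \<delta> \<le> wprod W m s n i j"
  shows "ydiam (s + n) \<le> (1 - real m * \<delta>) * ydiam s + 2 * (\<Sum>k<n. ydrift (s + k))"
  unfolding ydiam_def
proof (rule diam_perturbed_averaging[OF m_pos W_nonneg W_row_sum y_update_W _ lb])
  fix k j assume j: "j < m"
  have "norm ((1 / phi j k) *\<^sub>R (gf j (x j (Suc k)) - gf j (x j k)))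
      = (1 / phi j k) * norm (gf j (x j (Suc k)) - gf j (x j k))"
    using phi_pos[OF j, of k] by simp
  also have "\<dots> \<le> (1 / eta) * (Lf * norm (x j (Suc k) - x j k))"
  proof (rule mult_mono)
    show "1 / phi j k \<le> 1 / eta" using phi_ge_eta[OF j] eta_pos by (simp add: frac_le)
    show "norm (gf j (x j (Suc k)) - gf j (x j k)) \<le> Lf * norm (x j (Suc k) - x j k)"
      using gf_lipschitz[OF j x_in_K[OF j] x_in_K[OF j]] .
  qed (use eta_pos in auto)
  also have "\<dots> \<le> (1 / eta) * (Lf * (xdiam k + alpha * dmax k))"
    using norm_x_Suc_diff_le[OF j, of k] Lf_pos eta_pos by (intro mult_left_mono) auto
  finally show "norm ((1 / phi j k) *\<^sub>R (gf j (x j (Suc k)) - gf j (x j k))) \<le> ydrift k"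
    by (simp add: ydrift_def)
qed

lemma ydiam_growth: "ydiam n \<le> ydiam 0 + 2 * (\<Sum>k<n. ydrift k)"
  using ydiam_bound[where s = 0 and n = n and \<delta> = 0] wprod_nonneg[of m W, OF W_nonneg] by simp

lemma ydiam_window: "ydiam (s + T) \<le> rho * ydiam s + 2 * (\<Sum>k<T. ydrift (s + k))"
  using ydiam_bound[where s = s and n = T and \<delta> = delta] wprod_W_ge_delta by (simp add: rho_def)


lemma phi_Suc_mult_W: "i < m \<Longrightarrow> phi i (Suc k) * W k i j = c k i j * phi j k"
  using phi_pos[of i "Suc k"] by (simp add: W_def)

lemma weighted_step_sq_ge:
  "eta / real m * (dmax k)\<^sup>2 \<le> (\<Sum>j<m. phi j k / real m * (norm (xhat j k - x j k))\<^sup>2)"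
proof -
  obtain j where j: "j < m" "dmax k = norm (xhat j k - x j k)" using dmax_attained by blast
  have "eta / real m * (dmax k)\<^sup>2 \<le> phi j k / real m * (norm (xhat j k - x j k))\<^sup>2"
    using j phi_ge_eta[OF j(1), of k] by (auto intro!: mult_right_mono divide_right_mono)
  also have "\<dots> \<le> (\<Sum>j<m. phi j k / real m * (norm (xhat j k - x j k))\<^sup>2)"
    by (rule member_le_sum) (use j phi_nonneg in auto)
  finally show ?thesis .
qed

lemma weighted_tracking_error_sq_le:
  "(\<Sum>j<m. phi j k / real m * (norm (y j k - gF (x j k)))\<^sup>2) \<le> 2 * (1 + Lf\<^sup>2) * ((xdiam k)\<^sup>2 + (ydiam k)\<^sup>2)"
proof -
  have "(\<Sum>j<m. phi j k / real m * (norm (y j k - gF (x j k)))\<^sup>2)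
      \<le> (\<Sum>j<m. phi j k / real m * (ydiam k + Lf * xdiam k)\<^sup>2)"
    by (intro sum_mono mult_left_mono power_mono) (use tracking_error_le phi_nonneg in auto)
  also have "\<dots> = (ydiam k + Lf * xdiam k)\<^sup>2"
    using m_pos by (simp add: sum_distrib_right[symmetric] sum_divide_distrib[symmetric] phi_sum)
  also have "\<dots> \<le> 2 * (ydiam k)\<^sup>2 + 2 * (Lf * xdiam k)\<^sup>2"
    using sum_squares_ge_zero[of "ydiam k - Lf * xdiam k" 0] by (simp add: power2_eq_square algebra_simps)
  also have "\<dots> \<le> 2 * (1 + Lf\<^sup>2) * ((xdiam k)\<^sup>2 + (ydiam k)\<^sup>2)"
    by (simp add: power_mult_distrib algebra_simps)
  finally show ?thesis .
qed

end

section \<open>Small step sizes\<close>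

context sonata_problem
begin

definition k_desc where "k_desc = mut_min / 8 * eta / real m"
definition k_err where "k_err = 2 * (1 / mu + 1 / mut_min) * (1 + Lf\<^sup>2)"
definition Gamma where "Gamma = 2 * real T * Lf / eta"
definition gap where "gap = (1 - rho) / 2"
definition P_x where "P_x = 4 * real T / gap"
definition P_y where "P_y = 2 * Gamma / gap"
definition g_V where "g_V = sqrt (3 * k_err / (k_desc * tau))"

text \<open>The step-size bound: \<open>alpha L \<le> mut_min / 4\<close> makes every node step a descent step,
  \<open>alpha T tau \<le> 2 (1 - rho)\<close> keeps the target rate \<open>1 - alpha tau / 4\<close> above the consensus
  contraction over a window, and the last term is the small-gain condition coupling the Lyapunov
  function with the disagreements.\<close>

definition abar where
  "abar = min (min 1 (mut_min / (4 * L)))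
     (min (2 * (1 - rho) / (real T * tau)) (1 / (4 * g_V\<^sup>2 * (P_x + P_y)\<^sup>2 * (2 + P_y)\<^sup>2)))"

lemma k_desc_pos: "k_desc > 0" using mut_min_pos eta_pos m_pos by (simp add: k_desc_def)
lemma k_err_pos: "k_err > 0" using mut_min_pos mu_pos by (simp add: k_err_def add_pos_nonneg)
lemma gap_pos: "gap > 0" using delta_pos m_pos by (simp add: gap_def rho_def)
lemma Gamma_pos: "Gamma > 0" using T_pos Lf_pos eta_pos by (simp add: Gamma_def)
lemma g_V_pos: "g_V > 0" using k_desc_pos k_err_pos tau_pos by (simp add: g_V_def)
lemma P_x_pos: "P_x > 0" using T_pos gap_pos by (simp add: P_x_def)
lemma P_y_pos: "P_y > 0" using Gamma_pos gap_pos by (simp add: P_y_def)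

lemma abar_pos: "abar > 0"
  using mut_min_pos L_pos delta_pos m_pos T_pos tau_pos g_V_pos P_x_pos P_y_pos
  by (simp add: abar_def rho_def)

lemma abar_le1: "abar \<le> 1" by (simp add: abar_def)

end

lemma (in sonata_run) gap_le_half: "gap \<le> 1 / 2"
  using rho_nonneg by (simp add: gap_def)

locale sonata_step = sonata_run +
  assumes alpha_lt_abar: "alpha < abar"
begin

lemma alpha_L_small: "alpha * L \<le> mut_min / 4"
proof -
  have "alpha \<le> mut_min / (4 * L)" using alpha_lt_abar by (simp add: abar_def)
  then show ?thesis using L_pos by (simp add: field_simps)
qed

lemma alpha_tau_pos: "alpha * tau > 0" using alpha_pos tau_pos by simp
lemma alpha_tau_le1: "alpha * tau \<le> 1" using alpha_pos alpha_le1 tau_pos tau_le1 by (simp add: mult_le_one)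

lemma node_descent:
  assumes j: "j < m" and w: "w \<in> K"
  shows "U (xhalf j k) \<le> (1 - alpha * tau) * U (x j k) + alpha * tau * U w
          - alpha * (mut_min / 8) * (norm (xhat j k - x j k))\<^sup>2
          + alpha * (1 / mu + 1 / mut_min) * (norm (y j k - gF (x j k)))\<^sup>2"
proof -
  define xk xh where "xk = x j k" and "xh = xhat j k"
  define d e where "d = xh - xk" and "e = y j k - gF xk"
  have xk: "xk \<in> K" and xh: "xh \<in> K" using x_in_K xhat_in_K j by (simp_all add: xk_def xh_def)
  have "xhalf j k = xk + alpha *\<^sub>R d" using xhalf_eq[OF j] by (simp add: xk_def xh_def d_def)
  then have F: "F (xhalf j k) \<le> F xk + alpha * (gF xk \<bullet> d) + L / 2 * alpha\<^sup>2 * (norm d)\<^sup>2"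
    using F_quadratic_upper[OF xk xhalf_in_K[OF j, of k]] alpha_pos by (simp add: power_mult_distrib)
  have "xhalf j k = (1 - alpha) *\<^sub>R xk + alpha *\<^sub>R xh" using xhalf_eq[OF j] by (simp add: xk_def xh_def algebra_simps)
  then have G: "G (xhalf j k) \<le> (1 - alpha) * G xk + alpha * G xh"
    using convex_onD[OF G_convex, of alpha xk xh] alpha_pos alpha_le1 xk xh by simp
  have S: "alpha * (gF xk \<bullet> d + G xh - G xk)
      \<le> alpha * (tau * (U w - U xk) - mut j / 4 * (norm d)\<^sup>2 + (1 / mu + 1 / mut j) * (norm e)\<^sup>2)"
    using mult_left_mono[OF surrogate_step_descent[OF j w, of k]] alpha_pos by (simp add: xk_def xh_def d_def e_def)
  have "L / 2 * alpha\<^sup>2 * (norm d)\<^sup>2 \<le> alpha * (mut_min / 8) * (norm d)\<^sup>2"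
    using mult_right_mono[OF alpha_L_small, of "alpha * (norm d)\<^sup>2 / 2"] alpha_pos
    by (simp add: power2_eq_square algebra_simps)
  moreover have "alpha * (mut_min / 4) * (norm d)\<^sup>2 \<le> alpha * (mut j / 4) * (norm d)\<^sup>2"
    using mut_min_le[OF j] alpha_pos by (intro mult_right_mono mult_left_mono) auto
  moreover have "alpha * (1 / mut j) * (norm e)\<^sup>2 \<le> alpha * (1 / mut_min) * (norm e)\<^sup>2"
    using mut_min_le[OF j] mut_min_pos alpha_pos by (intro mult_right_mono mult_left_mono) (auto simp: frac_le)
  ultimately show ?thesis using F G S
    by (simp add: U_eq xk_def xh_def d_def e_def algebra_simps add_divide_distrib)
qed

text \<open>A direct lower bound for \<open>U\<close> would need a subgradient of \<open>G\<close>; instead, the descent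
  inequality at node \<open>0\<close> bounds \<open>U w\<close> from below uniformly in \<open>w\<close>.\<close>

lemma U_bdd_below: "bdd_below (U ` K)"
proof -
  define C where "C = (U (xhalf 0 0) - (1 - alpha * tau) * U (x 0 0)
    + alpha * (mut_min / 8) * (norm (xhat 0 0 - x 0 0))\<^sup>2
    - alpha * (1 / mu + 1 / mut_min) * (norm (y 0 0 - gF (x 0 0)))\<^sup>2) / (alpha * tau)"
  have "C \<le> U w" if "w \<in> K" for w
    using node_descent[OF _ that, of 0 0] m_pos alpha_tau_pos by (simp add: C_def divide_le_eq mult.commute)
  then show ?thesis by (rule bdd_belowI2)
qed

lemma Ustar_le: "w \<in> K \<Longrightarrow> Ustar \<le> U w"
  unfolding Ustar_def by (rule cInf_lower) (use U_bdd_below in auto)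

lemma node_descent_Ustar:
  assumes j: "j < m"
  shows "U (xhalf j k) - Ustar \<le> (1 - alpha * tau) * (U (x j k) - Ustar)
          - alpha * (mut_min / 8) * (norm (xhat j k - x j k))\<^sup>2
          + alpha * (1 / mu + 1 / mut_min) * (norm (y j k - gF (x j k)))\<^sup>2"
proof -
  define Z where "Z = (U (xhalf j k) - (1 - alpha * tau) * U (x j k)
     + alpha * (mut_min / 8) * (norm (xhat j k - x j k))\<^sup>2
     - alpha * (1 / mu + 1 / mut_min) * (norm (y j k - gF (x j k)))\<^sup>2) / (alpha * tau)"
  have "Z \<le> U w" if "w \<in> K" for w
    using node_descent[OF j that, of k] alpha_tau_pos by (simp add: Z_def divide_le_eq mult.commute)
  then have "Z \<le> Ustar" unfolding Ustar_def using K_ne by (intro cInf_greatest) auto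
  then show ?thesis using alpha_tau_pos by (simp add: Z_def divide_le_eq algebra_simps)
qed

lemma lyap_nonneg: "lyap k \<ge> 0"
  unfolding lyap_def using phi_nonneg Ustar_le x_in_K m_pos by (auto intro!: sum_nonneg mult_nonneg_nonneg)

lemma U_x_Suc_le: "i < m \<Longrightarrow> U (x i (Suc k)) \<le> (\<Sum>j<m. W k i j * U (xhalf j k))"
  using convex_on_sum[OF _ _ U_convex, of "{..<m}" "W k i" "\<lambda>j. xhalf j k"]
    x_update_W[of i k] xhalf_eq W_row_sum[of i k] W_nonneg xhalf_in_K m_pos
  by (simp add: lessThan_empty_iff)

lemma lyap_Suc_le: "lyap (Suc k) \<le> (\<Sum>j<m. (phi j k / real m) * (U (xhalf j k) - Ustar))"
proof -
  define gap_half where "gap_half j = U (xhalf j k) - Ustar" for j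
  have "lyap (Suc k) = (\<Sum>i<m. phi i (Suc k) * (U (x i (Suc k)) - Ustar)) / real m"
    by (simp add: lyap_def sum_divide_distrib)
  also have "\<dots> \<le> (\<Sum>i<m. \<Sum>j<m. (phi i (Suc k) * W k i j) * gap_half j) / real m"
  proof (intro divide_right_mono sum_mono)
    fix i assume i: "i \<in> {..<m}"
    have "U (x i (Suc k)) - Ustar \<le> (\<Sum>j<m. W k i j * gap_half j)"
      using U_x_Suc_le[of i k] W_row_sum[of i k] i
      by (simp add: gap_half_def right_diff_distrib sum_subtractf sum_distrib_right[symmetric])
    then have "phi i (Suc k) * (U (x i (Suc k)) - Ustar) \<le> phi i (Suc k) * (\<Sum>j<m. W k i j * gap_half j)"
      using phi_nonneg[of i "Suc k"] i by (intro mult_left_mono) auto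
    then show "phi i (Suc k) * (U (x i (Suc k)) - Ustar) \<le> (\<Sum>j<m. (phi i (Suc k) * W k i j) * gap_half j)"
      by (simp add: sum_distrib_left mult.assoc)
  qed simp
  also have "\<dots> = (\<Sum>i<m. \<Sum>j<m. c k i j * (phi j k * gap_half j)) / real m"
    by (intro arg_cong[where f = "\<lambda>s. s / real m"] sum.cong refl) (simp add: phi_Suc_mult_W mult.assoc)
  also have "\<dots> = (\<Sum>j<m. \<Sum>i<m. c k i j * (phi j k * gap_half j)) / real m"
    by (subst sum.swap) (rule refl)
  also have "\<dots> = (\<Sum>j<m. (\<Sum>i<m. c k i j) * (phi j k * gap_half j)) / real m"
    by (simp add: sum_distrib_right)
  also have "\<dots> = (\<Sum>j<m. (phi j k / real m) * gap_half j)"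
    by (simp add: c_colstoch sum_divide_distrib)
  finally show ?thesis by (simp add: gap_half_def)
qed

lemma lyap_descent:
  "lyap (Suc k) \<le> (1 - alpha * tau) * lyap k - alpha * k_desc * (dmax k)\<^sup>2
     + alpha * k_err * ((xdiam k)\<^sup>2 + (ydiam k)\<^sup>2)"
proof -
  define p where "p j = phi j k / real m" for j
  define gp sd se where "gp j = U (x j k) - Ustar" and "sd j = (norm (xhat j k - x j k))\<^sup>2"
    and "se j = (norm (y j k - gF (x j k)))\<^sup>2" for j
  define A B C where "A = 1 - alpha * tau" and "B = alpha * (mut_min / 8)"
    and "C = alpha * (1 / mu + 1 / mut_min)"
  have "lyap (Suc k) \<le> (\<Sum>j<m. p j * (A * gp j - B * sd j + C * se j))"
    using lyap_Suc_le[of k] unfolding p_def A_def B_def C_def gp_def sd_def se_def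
    by (elim order_trans, intro sum_mono mult_left_mono) (use node_descent_Ustar phi_nonneg m_pos in auto)
  also have "\<dots> = (\<Sum>j<m. A * (p j * gp j) - B * (p j * sd j) + C * (p j * se j))"
    by (rule sum.cong) (simp_all add: algebra_simps)
  also have "\<dots> = A * lyap k - B * (\<Sum>j<m. p j * sd j) + C * (\<Sum>j<m. p j * se j)"
    by (simp add: sum.distrib sum_subtractf sum_distrib_left lyap_def p_def gp_def)
  also have "\<dots> \<le> A * lyap k - alpha * k_desc * (dmax k)\<^sup>2 + alpha * k_err * ((xdiam k)\<^sup>2 + (ydiam k)\<^sup>2)"
  proof -
    have "alpha * k_desc * (dmax k)\<^sup>2 \<le> B * (\<Sum>j<m. p j * sd j)"
      using mult_left_mono[OF weighted_step_sq_ge[of k], of B] alpha_pos mut_min_pos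
      by (simp add: B_def k_desc_def sd_def p_def)
    moreover have "C * (\<Sum>j<m. p j * se j) \<le> C * (2 * (1 + Lf\<^sup>2) * ((xdiam k)\<^sup>2 + (ydiam k)\<^sup>2))"
      using weighted_tracking_error_sq_le[of k] alpha_pos mut_min_pos mu_pos
      by (intro mult_left_mono) (simp_all add: C_def se_def p_def)
    moreover have "C * (2 * (1 + Lf\<^sup>2) * ((xdiam k)\<^sup>2 + (ydiam k)\<^sup>2)) = alpha * k_err * ((xdiam k)\<^sup>2 + (ydiam k)\<^sup>2)"
      by (simp only: C_def k_err_def mult_ac)
    ultimately show ?thesis by linarith
  qed
  finally show ?thesis by (simp add: A_def)
qed

definition rate where "rate = 1 - alpha * tau / 4"

lemma rate_pos: "rate > 0" using alpha_tau_le1 by (simp add: rate_def)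
lemma rate_lt1: "rate < 1" using alpha_tau_pos by (simp add: rate_def)

lemma rate_sq: "1 - alpha * tau / 2 \<le> rate\<^sup>2"
proof -
  have "rate\<^sup>2 = 1 - alpha * tau / 2 + (alpha * tau)\<^sup>2 / 16"
    by (simp add: rate_def power2_eq_square algebra_simps)
  then show ?thesis by simp
qed

lemma rate_window: "(1 + rho) / 2 \<le> rate ^ T"
proof -
  have "alpha \<le> 2 * (1 - rho) / (real T * tau)" using alpha_lt_abar by (simp add: abar_def)
  then have "alpha * (real T * tau) \<le> 2 * (1 - rho)" using T_pos tau_pos by (simp add: le_divide_eq)
  then have "(1 + rho) / 2 \<le> 1 + real T * (- (alpha * tau / 4))" by (simp add: field_simps)
  also have "\<dots> \<le> (1 + (- (alpha * tau / 4))) ^ T"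
    by (rule Bernoulli_inequality) (use alpha_tau_le1 in simp)
  finally show ?thesis by (simp add: rate_def)
qed

lemma rate_pow_le: "rate ^ (s + k) \<le> rate ^ s"
  using rate_pos rate_lt1 by (simp add: power_add mult_left_le power_le_one)

lemma small_gain: "sqrt alpha * g_V * ((P_x + P_y) * (2 + P_y)) \<le> 1 / 2"
proof -
  define Q where "Q = g_V * ((P_x + P_y) * (2 + P_y))"
  have Q: "Q > 0" using g_V_pos P_x_pos P_y_pos by (simp add: Q_def)
  have "alpha \<le> 1 / (4 * g_V\<^sup>2 * (P_x + P_y)\<^sup>2 * (2 + P_y)\<^sup>2)" using alpha_lt_abar by (simp add: abar_def)
  also have "\<dots> = (1 / (2 * Q))\<^sup>2" by (simp add: Q_def power2_eq_square)
  finally have "sqrt alpha \<le> 1 / (2 * Q)" using Q real_sqrt_le_mono by fastforce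
  then have "sqrt alpha * Q \<le> 1 / 2" using Q by (simp add: le_divide_eq)
  then show ?thesis by (simp add: Q_def mult.assoc)
qed

text \<open>Bounds \<open>Cx rate\<^sup>\<nu>\<close>, \<open>Cy rate\<^sup>\<nu>\<close>, \<open>CV rate\<^sup>2\<^sup>\<nu>\<close> and \<open>Cd rate\<^sup>\<nu>\<close> for \<open>xdiam\<close>, \<open>ydiam\<close>, \<open>lyap\<close>
  and \<open>dmax\<close>. The step bound enters the disagreement recursions only through
  \<open>alpha * Cd = w0 + sqrt alpha * g_V * (Cx + Cy)\<close>, whose feedback term is small for small
  \<open>alpha\<close>; this breaks the circularity of the four bounds.\<close>

definition w0 where "w0 = sqrt (alpha * lyap 0 / k_desc)"
definition Cx where "Cx = 2 * (2 * xdiam 0 + 2 * ydiam 0 + (P_x + P_y) * w0)"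
definition Cy where "Cy = (1 + P_y) * Cx"
definition CV where "CV = lyap 0 + 2 * k_err / tau * (Cx\<^sup>2 + Cy\<^sup>2)"
definition Cd where "Cd = (w0 + sqrt alpha * g_V * (Cx + Cy)) / alpha"

lemma w0_nonneg: "w0 \<ge> 0"
  using lyap_nonneg alpha_pos k_desc_pos by (simp add: w0_def)

lemma Cx_nonneg: "Cx \<ge> 0" and Cy_nonneg: "Cy \<ge> 0"
  using xdiam_nonneg ydiam_nonneg w0_nonneg P_x_pos P_y_pos by (simp_all add: Cx_def Cy_def)

lemma alpha_Cd: "alpha * Cd = w0 + sqrt alpha * g_V * (Cx + Cy)"
  using alpha_pos by (simp add: Cd_def)

lemma Cd_nonneg: "Cd \<ge> 0"
  using w0_nonneg Cx_nonneg Cy_nonneg g_V_pos alpha_pos by (simp add: Cd_def)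

lemma step_feedback_le:
  assumes "0 \<le> P" "P \<le> P_x + P_y"
  shows "P * (sqrt alpha * g_V * (Cx + Cy)) \<le> Cx / 2"
proof -
  have "P * (sqrt alpha * g_V * (Cx + Cy)) = (P * (2 + P_y)) * (sqrt alpha * g_V) * Cx"
    by (simp add: Cy_def algebra_simps)
  also have "\<dots> \<le> ((P_x + P_y) * (2 + P_y)) * (sqrt alpha * g_V) * Cx"
    using assms P_y_pos g_V_pos Cx_nonneg alpha_pos by (intro mult_right_mono) auto
  also have "\<dots> \<le> 1 / 2 * Cx"
    using small_gain Cx_nonneg by (intro mult_right_mono) (simp_all add: mult_ac)
  finally show ?thesis by simp
qed

lemma Cx_budget: "2 * xdiam 0 + P_x * (alpha * Cd) \<le> Cx"
proof -
  have "2 * xdiam 0 + P_x * w0 \<le> Cx / 2"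
    using P_y_pos ydiam_nonneg[of 0] w0_nonneg by (simp add: Cx_def algebra_simps)
  then show ?thesis
    using step_feedback_le[of P_x] P_x_pos P_y_pos by (simp add: alpha_Cd distrib_left)
qed

lemma Cy_budget: "2 * ydiam 0 + P_y * (Cx + alpha * Cd) \<le> Cy"
proof -
  have "2 * ydiam 0 + P_y * w0 \<le> Cx / 2"
    using P_x_pos xdiam_nonneg[of 0] w0_nonneg by (simp add: Cx_def algebra_simps)
  then show ?thesis
    using step_feedback_le[of P_y] P_x_pos P_y_pos by (simp add: alpha_Cd Cy_def algebra_simps)
qed

lemma Cd_sq_ge: "lyap 0 / (alpha * k_desc) + 3 * (k_err / (k_desc * tau * alpha)) * (Cx + Cy)\<^sup>2 \<le> Cd\<^sup>2"
proof -
  define E where "E = sqrt alpha * g_V * (Cx + Cy)"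
  have pos: "0 < alpha" "0 < k_desc" "0 < tau" "0 < k_err"
    using alpha_pos k_desc_pos tau_pos k_err_pos by auto
  have "w0\<^sup>2 = alpha * lyap 0 / k_desc" using lyap_nonneg pos by (simp add: w0_def)
  then have w: "w0\<^sup>2 / alpha\<^sup>2 = lyap 0 / (alpha * k_desc)"
    using pos by (simp add: power2_eq_square)
  have "E\<^sup>2 = alpha * (3 * k_err / (k_desc * tau)) * (Cx + Cy)\<^sup>2"
    using pos by (simp add: E_def g_V_def power_mult_distrib)
  then have e: "E\<^sup>2 / alpha\<^sup>2 = 3 * (k_err / (k_desc * tau * alpha)) * (Cx + Cy)\<^sup>2"
    using pos by (simp add: power2_eq_square)
  have "0 \<le> E" using g_V_pos Cx_nonneg Cy_nonneg alpha_pos by (simp add: E_def)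
  then have "w0\<^sup>2 + E\<^sup>2 \<le> (w0 + E)\<^sup>2" using w0_nonneg by (simp add: power2_sum)
  moreover have "Cd = (w0 + E) / alpha" by (simp add: Cd_def E_def)
  ultimately have "(w0\<^sup>2 + E\<^sup>2) / alpha\<^sup>2 \<le> Cd\<^sup>2" by (simp add: power_divide divide_right_mono)
  then show ?thesis by (simp only: add_divide_distrib w e)
qed

lemma Cd_budget: "CV / (alpha * k_desc) + k_err / k_desc * (Cx\<^sup>2 + Cy\<^sup>2) \<le> Cd\<^sup>2"
proof -
  define Q where "Q = k_err / (k_desc * tau * alpha)"
  have pos: "0 < alpha" "0 < k_desc" "0 < tau" "0 < k_err"
    using alpha_pos k_desc_pos tau_pos k_err_pos by auto
  have "CV / (alpha * k_desc) = lyap 0 / (alpha * k_desc) + 2 * Q * (Cx\<^sup>2 + Cy\<^sup>2)"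
    using pos by (simp add: CV_def Q_def field_simps)
  moreover have "k_err / k_desc * (Cx\<^sup>2 + Cy\<^sup>2) \<le> Q * (Cx\<^sup>2 + Cy\<^sup>2)"
    using pos alpha_tau_le1 by (intro mult_right_mono) (simp_all add: Q_def field_simps mult.commute)
  ultimately have "CV / (alpha * k_desc) + k_err / k_desc * (Cx\<^sup>2 + Cy\<^sup>2)
      \<le> lyap 0 / (alpha * k_desc) + 3 * Q * (Cx\<^sup>2 + Cy\<^sup>2)" by simp
  also have "\<dots> \<le> lyap 0 / (alpha * k_desc) + 3 * Q * (Cx + Cy)\<^sup>2"
    using Cx_nonneg Cy_nonneg pos
    by (intro add_left_mono mult_left_mono) (simp_all add: Q_def power2_eq_square algebra_simps)
  also have "\<dots> \<le> Cd\<^sup>2" using Cd_sq_ge by (simp add: Q_def)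
  finally show ?thesis .
qed

lemma xdiam_decay:
  assumes x: "\<And>k. k < \<nu> \<Longrightarrow> xdiam k \<le> Cx * rate ^ k"
    and d: "\<And>k. k < \<nu> \<Longrightarrow> dmax k \<le> Cd * rate ^ k"
  shows "xdiam \<nu> \<le> Cx * rate ^ \<nu>"
proof (rule window_recursion_decay[where p = "\<lambda>k. alpha * dmax k" and P = "alpha * Cd"])
  fix s k assume "s + k < \<nu>"
  then have "dmax (s + k) \<le> Cd * rate ^ s"
    using d[of "s + k"] mult_left_mono[OF rate_pow_le Cd_nonneg] by (meson order_trans)
  then show "alpha * dmax (s + k) \<le> alpha * Cd * rate ^ s"
    using alpha_pos by (simp add: mult.assoc)
next
  have "2 * xdiam 0 + 2 * (2 * (real T * (alpha * Cd))) / gap \<le> Cx"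
    using Cx_budget by (simp add: P_x_def)
  from window_budget[OF this gap_pos gap_le_half _ xdiam_nonneg] alpha_pos Cd_nonneg
  show "xdiam 0 + 2 * (real T * (alpha * Cd)) \<le> Cx / 2"
    "2 * (real T * (alpha * Cd)) \<le> (1 - rho) / 2 * Cx"
    by (simp_all add: gap_def)
qed (use xdiam_growth xdiam_window x T_pos rho_nonneg rate_pos rate_lt1 rate_window Cx_nonneg
       alpha_pos Cd_nonneg in auto)

lemma ydiam_decay:
  assumes x: "\<And>k. k < \<nu> \<Longrightarrow> xdiam k \<le> Cx * rate ^ k"
    and y: "\<And>k. k < \<nu> \<Longrightarrow> ydiam k \<le> Cy * rate ^ k"
    and d: "\<And>k. k < \<nu> \<Longrightarrow> dmax k \<le> Cd * rate ^ k"
  shows "ydiam \<nu> \<le> Cy * rate ^ \<nu>"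
proof (rule window_recursion_decay[where p = ydrift and P = "Lf / eta * (Cx + alpha * Cd)"])
  fix s k assume "s + k < \<nu>"
  then have "xdiam (s + k) \<le> Cx * rate ^ s" "dmax (s + k) \<le> Cd * rate ^ s"
    using x[of "s + k"] d[of "s + k"] mult_left_mono[OF rate_pow_le Cx_nonneg]
      mult_left_mono[OF rate_pow_le Cd_nonneg] by (meson order_trans)+
  then have "xdiam (s + k) + alpha * dmax (s + k) \<le> (Cx + alpha * Cd) * rate ^ s"
    using alpha_pos by (simp add: algebra_simps mult_left_mono add_mono)
  then have "Lf / eta * (xdiam (s + k) + alpha * dmax (s + k)) \<le> Lf / eta * ((Cx + alpha * Cd) * rate ^ s)"
    using Lf_pos eta_pos by (intro mult_left_mono) auto
  then show "ydrift (s + k) \<le> Lf / eta * (Cx + alpha * Cd) * rate ^ s"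
    by (simp add: ydrift_def mult.assoc)
next
  have eq: "2 * (real T * (Lf / eta * (Cx + alpha * Cd))) = Gamma * (Cx + alpha * Cd)"
    by (simp add: Gamma_def)
  have "2 * ydiam 0 + 2 * (Gamma * (Cx + alpha * Cd)) / gap \<le> Cy"
    using Cy_budget by (simp add: P_y_def)
  from window_budget[OF this gap_pos gap_le_half _ ydiam_nonneg] Gamma_pos Cx_nonneg alpha_pos Cd_nonneg
  show "ydiam 0 + 2 * (real T * (Lf / eta * (Cx + alpha * Cd))) \<le> Cy / 2"
    "2 * (real T * (Lf / eta * (Cx + alpha * Cd))) \<le> (1 - rho) / 2 * Cy"
    unfolding eq by (simp_all add: gap_def)
qed (use ydiam_growth ydiam_window y T_pos rho_nonneg rate_pos rate_lt1 rate_window Cy_nonneg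
       Lf_pos eta_pos Cx_nonneg alpha_pos Cd_nonneg in auto)

lemma lyap_decay:
  assumes V: "lyap k \<le> CV * (rate ^ k)\<^sup>2"
    and x: "xdiam k \<le> Cx * rate ^ k" and y: "ydiam k \<le> Cy * rate ^ k"
  shows "lyap (Suc k) \<le> CV * (rate ^ Suc k)\<^sup>2"
proof -
  have "0 \<le> alpha * k_desc * (dmax k)\<^sup>2" using alpha_pos k_desc_pos by simp
  then have "lyap (Suc k) \<le> (1 - alpha * tau) * lyap k + alpha * k_err * ((xdiam k)\<^sup>2 + (ydiam k)\<^sup>2)"
    using lyap_descent[of k] by linarith
  also have "\<dots> \<le> (1 - alpha * tau) * (CV * (rate ^ k)\<^sup>2) + alpha * k_err * ((Cx\<^sup>2 + Cy\<^sup>2) * (rate ^ k)\<^sup>2)"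
    using V power_mono[OF x xdiam_nonneg, of 2] power_mono[OF y ydiam_nonneg, of 2]
      alpha_tau_le1 alpha_pos k_err_pos
    by (intro add_mono mult_left_mono) (simp_all add: power_mult_distrib algebra_simps)
  also have "\<dots> = ((1 - alpha * tau) * CV + alpha * k_err * (Cx\<^sup>2 + Cy\<^sup>2)) * (rate ^ k)\<^sup>2"
    by (simp add: algebra_simps)
  also have "\<dots> \<le> (rate\<^sup>2 * CV) * (rate ^ k)\<^sup>2"
  proof (rule mult_right_mono)
    have "alpha * k_err * (Cx\<^sup>2 + Cy\<^sup>2) = alpha * tau / 2 * (2 * k_err / tau * (Cx\<^sup>2 + Cy\<^sup>2))"
      using tau_pos by (simp add: field_simps)
    also have "\<dots> \<le> alpha * tau / 2 * CV"
      using alpha_tau_pos lyap_nonneg[of 0] by (intro mult_left_mono) (auto simp: CV_def)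
    finally have "(1 - alpha * tau) * CV + alpha * k_err * (Cx\<^sup>2 + Cy\<^sup>2) \<le> (1 - alpha * tau / 2) * CV"
      by (simp add: algebra_simps)
    also have "\<dots> \<le> rate\<^sup>2 * CV"
      using rate_sq lyap_nonneg[of 0] k_err_pos tau_pos by (intro mult_right_mono) (auto simp: CV_def)
    finally show "(1 - alpha * tau) * CV + alpha * k_err * (Cx\<^sup>2 + Cy\<^sup>2) \<le> rate\<^sup>2 * CV" .
  qed simp
  also have "\<dots> = CV * (rate ^ Suc k)\<^sup>2" by (simp add: power_mult_distrib algebra_simps)
  finally show ?thesis .
qed

lemma dmax_decay:
  assumes V: "lyap \<nu> \<le> CV * (rate ^ \<nu>)\<^sup>2"
    and x: "xdiam \<nu> \<le> Cx * rate ^ \<nu>" and y: "ydiam \<nu> \<le> Cy * rate ^ \<nu>"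
  shows "dmax \<nu> \<le> Cd * rate ^ \<nu>"
proof -
  have "alpha * k_desc * (dmax \<nu>)\<^sup>2 \<le> lyap \<nu> + alpha * k_err * ((xdiam \<nu>)\<^sup>2 + (ydiam \<nu>)\<^sup>2)"
    using lyap_nonneg[of "Suc \<nu>"] lyap_descent[of \<nu>] lyap_nonneg[of \<nu>] alpha_tau_pos
      mult_nonneg_nonneg[of "alpha * tau" "lyap \<nu>"] by (simp add: algebra_simps)
  also have "\<dots> \<le> CV * (rate ^ \<nu>)\<^sup>2 + alpha * k_err * ((Cx\<^sup>2 + Cy\<^sup>2) * (rate ^ \<nu>)\<^sup>2)"
    using V power_mono[OF x xdiam_nonneg, of 2] power_mono[OF y ydiam_nonneg, of 2] alpha_pos k_err_pos
    by (intro add_mono mult_left_mono) (simp_all add: power_mult_distrib algebra_simps)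
  finally have "(dmax \<nu>)\<^sup>2 \<le> (CV / (alpha * k_desc) + k_err / k_desc * (Cx\<^sup>2 + Cy\<^sup>2)) * (rate ^ \<nu>)\<^sup>2"
    using alpha_pos k_desc_pos by (simp add: field_simps)
  also have "\<dots> \<le> (Cd * rate ^ \<nu>)\<^sup>2"
    using mult_right_mono[OF Cd_budget, of "(rate ^ \<nu>)\<^sup>2"] by (simp add: power_mult_distrib)
  finally have "(dmax \<nu>)\<^sup>2 \<le> (Cd * rate ^ \<nu>)\<^sup>2" .
  moreover have "0 \<le> Cd * rate ^ \<nu>" using Cd_nonneg rate_pos by simp
  ultimately show ?thesis by (rule power2_le_imp_le)
qed

lemma geometric_decay:
  "xdiam \<nu> \<le> Cx * rate ^ \<nu> \<and> ydiam \<nu> \<le> Cy * rate ^ \<nu> \<and> lyap \<nu> \<le> CV * (rate ^ \<nu>)\<^sup>2 \<and> dmax \<nu> \<le> Cd * rate ^ \<nu>"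
proof (induction \<nu> rule: less_induct)
  case (less \<nu>)
  have x: "xdiam \<nu> \<le> Cx * rate ^ \<nu>" using xdiam_decay less by blast
  have y: "ydiam \<nu> \<le> Cy * rate ^ \<nu>" using ydiam_decay less by blast
  have V: "lyap \<nu> \<le> CV * (rate ^ \<nu>)\<^sup>2"
  proof (cases \<nu>)
    case 0
    then show ?thesis using k_err_pos tau_pos by (simp add: CV_def)
  next
    case (Suc k)
    then show ?thesis using lyap_decay less[of k] by simp
  qed
  show ?case using x y V dmax_decay[OF V x y] by blast
qed

theorem R_linear_convergence:
  assumes i: "i < m"
  shows "R_linear_conv (\<lambda>\<nu>. U (x i \<nu>)) Ustar"
proof -
  have "\<bar>U (x i \<nu>) - Ustar\<bar> \<le> (real m / eta * CV) * (rate\<^sup>2) ^ \<nu>" for \<nu>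
  proof -
    have gap: "U (x i \<nu>) - Ustar \<ge> 0" using Ustar_le[OF x_in_K[OF i]] by simp
    have "(eta / real m) * (U (x i \<nu>) - Ustar) \<le> (phi i \<nu> / real m) * (U (x i \<nu>) - Ustar)"
      using phi_ge_eta[OF i] gap m_pos by (intro mult_right_mono divide_right_mono) auto
    also have "\<dots> \<le> lyap \<nu>"
      unfolding lyap_def
      by (rule member_le_sum[of i "{..<m}" "\<lambda>i. (phi i \<nu> / real m) * (U (x i \<nu>) - Ustar)"])
         (use i phi_nonneg Ustar_le x_in_K in auto)
    also have "\<dots> \<le> CV * (rate ^ \<nu>)\<^sup>2" using geometric_decay by blast
    finally have "U (x i \<nu>) - Ustar \<le> (real m / eta) * (CV * (rate ^ \<nu>)\<^sup>2)"
      using eta_pos m_pos by (simp add: field_simps)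
    then show ?thesis using gap by (simp add: power_mult_distrib power_mult[symmetric] mult_ac)
  qed
  moreover have "0 < rate\<^sup>2" "rate\<^sup>2 < 1" using rate_pos rate_lt1 by (auto simp: power_less_one_iff)
  ultimately show ?thesis unfolding R_linear_conv_def by blast
qed

end

theorem theorem4p5:
  fixes m :: nat
    and K Oset :: "'a::euclidean_space set"
    and f :: "nat \<Rightarrow> 'a \<Rightarrow> real"
    and gf :: "nat \<Rightarrow> 'a \<Rightarrow> 'a"
    and Hf :: "nat \<Rightarrow> 'a \<Rightarrow> 'a \<Rightarrow> 'a"
    and G :: "'a \<Rightarrow> real"
    and mu L :: real
    and E :: "nat \<Rightarrow> (nat \<times> nat) set"
    and B :: nat
    and c :: "nat \<Rightarrow> nat \<Rightarrow> nat \<Rightarrow> real"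
    and c_l :: real
    and ft :: "nat \<Rightarrow> 'a \<Rightarrow> 'a \<Rightarrow> real"
    and gft :: "nat \<Rightarrow> 'a \<Rightarrow> 'a \<Rightarrow> 'a"
    and Hft :: "nat \<Rightarrow> 'a \<Rightarrow> 'a \<Rightarrow> 'a \<Rightarrow> 'a"
    and Lt mut Dl Du :: "nat \<Rightarrow> real"
  defines "HF \<equiv> (\<lambda>x h. (1 / real m) *\<^sub>R (\<Sum>i<m. Hf i x h))"
    and "U \<equiv> (\<lambda>x. (1 / real m) * (\<Sum>i<m. f i x) + G x)"
    and "Ustar \<equiv> Inf ((\<lambda>x. (1 / real m) * (\<Sum>i<m. f i x) + G x) ` K)"
  assumes m_pos: "m \<ge> 1"
    \<comment> \<open>Assumption (A)\<close>
    and K_ne: "K \<noteq> {}" and K_closed: "closed K" and K_convex: "convex K"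
    and O_open: "open Oset" and K_sub_O: "K \<subseteq> Oset"
    and f_grad: "\<And>i x. i < m \<Longrightarrow> x \<in> Oset \<Longrightarrow> (f i has_derivative (\<lambda>h. gf i x \<bullet> h)) (at x)"
    and f_hess: "\<And>i x. i < m \<Longrightarrow> x \<in> Oset \<Longrightarrow> (gf i has_derivative Hf i x) (at x)"
    and f_convex: "\<And>i. i < m \<Longrightarrow> convex_on Oset (f i)"
    and mu_pos: "mu > 0"
    and F_hess_bounds: "\<And>x h. x \<in> K \<Longrightarrow>
        mu * (norm h)\<^sup>2 \<le> HF x h \<bullet> h \<and> HF x h \<bullet> h \<le> L * (norm h)\<^sup>2"
    and G_convex: "convex_on K G"
    \<comment> \<open>Assumption (B')\<close>
    and E_vertices: "\<And>\<nu>. E \<nu> \<subseteq> {..<m} \<times> {..<m}"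
    and B_pos: "B > 0"
    and B_conn: "\<And>k. strongly_connected_digraph {..<m} (\<Union>t\<in>{k * B..<(k + 1) * B}. E t)"
    \<comment> \<open>Assumption (E)\<close>
    and c_l_pos: "c_l > 0"
    and c_diag: "\<And>\<nu> i. i < m \<Longrightarrow> c \<nu> i i \<ge> c_l"
    and c_edge: "\<And>\<nu> i j. i < m \<Longrightarrow> j < m \<Longrightarrow> j \<noteq> i \<Longrightarrow> (j, i) \<in> E \<nu> \<Longrightarrow> c \<nu> i j \<ge> c_l"
    and c_zero: "\<And>\<nu> i j. i < m \<Longrightarrow> j < m \<Longrightarrow> j \<noteq> i \<Longrightarrow> (j, i) \<notin> E \<nu> \<Longrightarrow> c \<nu> i j = 0"
    and c_colstoch: "\<And>\<nu> j. j < m \<Longrightarrow> (\<Sum>i<m. c \<nu> i j) = 1"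
    \<comment> \<open>Assumption (C)\<close>
    and ft_C2: "\<And>i. i < m \<Longrightarrow> C2_on (Oset \<times> Oset) (\<lambda>p. ft i (fst p) (snd p))"
    and ft_grad: "\<And>i x y. i < m \<Longrightarrow> x \<in> Oset \<Longrightarrow> y \<in> Oset \<Longrightarrow>
        ((\<lambda>u. ft i u y) has_derivative (\<lambda>h. gft i x y \<bullet> h)) (at x)"
    and ft_hess: "\<And>i x y. i < m \<Longrightarrow> x \<in> Oset \<Longrightarrow> y \<in> Oset \<Longrightarrow>
        ((\<lambda>u. gft i u y) has_derivative Hft i x y) (at x)"
    and ft_grad_consistent: "\<And>i x. i < m \<Longrightarrow> x \<in> Oset \<Longrightarrow> gft i x x = gf i x"
    and ft_lipschitz: "\<And>i x. i < m \<Longrightarrow> x \<in> K \<Longrightarrow> lipschitz_on (Lt i) K (\<lambda>u. gft i u x)"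
    and mut_pos: "\<And>i. i < m \<Longrightarrow> mut i > 0"
    and ft_strongly_convex: "\<And>i x. i < m \<Longrightarrow> x \<in> K \<Longrightarrow> strongly_convex_on (mut i) K (\<lambda>u. ft i u x)"
    and D_le: "\<And>i. i < m \<Longrightarrow> Dl i \<le> Du i"
    and D_bounds: "\<And>i x y h. i < m \<Longrightarrow> x \<in> K \<Longrightarrow> y \<in> K \<Longrightarrow>
        Dl i * (norm h)\<^sup>2 \<le> (Hft i x y h - HF x h) \<bullet> h \<and> (Hft i x y h - HF x h) \<bullet> h \<le> Du i * (norm h)\<^sup>2"
    \<comment> \<open>the theorem's extra hypothesis\<close>
    and mu_D: "Min (mut ` {..<m}) \<ge> Min (Dl ` {..<m})"
  shows "\<exists>abar. 0 < abar \<and> abar \<le> 1 \<and>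
    (\<forall>alpha x xhalf xhat y phi.
       0 < alpha \<and> alpha < abar \<and>
       \<comment> \<open>initialization\<close>
       (\<forall>i<m. x i 0 \<in> K \<and> y i 0 = gf i (x i 0) \<and> phi i 0 = 1) \<and>
       \<comment> \<open>local optimization step\<close>
       (\<forall>i<m. \<forall>\<nu>. xhat i \<nu> \<in> K \<and>
          (\<forall>z\<in>K. ft i (xhat i \<nu>) (x i \<nu>) + (y i \<nu> - gf i (x i \<nu>)) \<bullet> (xhat i \<nu> - x i \<nu>) + G (xhat i \<nu>)
                 \<le> ft i z (x i \<nu>) + (y i \<nu> - gf i (x i \<nu>)) \<bullet> (z - x i \<nu>) + G z)) \<and>
       (\<forall>i<m. \<forall>\<nu>. xhalf i \<nu> = x i \<nu> + alpha *\<^sub>R (xhat i \<nu> - x i \<nu>)) \<and>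
       \<comment> \<open>consensus and tracking steps\<close>
       (\<forall>i<m. \<forall>\<nu>. phi i (Suc \<nu>) = (\<Sum>j<m. c \<nu> i j * phi j \<nu>)) \<and>
       (\<forall>i<m. \<forall>\<nu>. x i (Suc \<nu>) = (1 / phi i (Suc \<nu>)) *\<^sub>R (\<Sum>j<m. (c \<nu> i j * phi j \<nu>) *\<^sub>R xhalf j \<nu>)) \<and>
       (\<forall>i<m. \<forall>\<nu>. y i (Suc \<nu>) = (1 / phi i (Suc \<nu>)) *\<^sub>R
          (\<Sum>j<m. c \<nu> i j *\<^sub>R (phi j \<nu> *\<^sub>R y j \<nu> + gf j (x j (Suc \<nu>)) - gf j (x j \<nu>))))
       \<longrightarrow> (\<forall>i<m. R_linear_conv (\<lambda>\<nu>. U (x i \<nu>)) Ustar))"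
proof -
  have D_upper: "\<And>i x y h. i < m \<Longrightarrow> x \<in> K \<Longrightarrow> y \<in> K \<Longrightarrow> (Hft i x y h - HF x h) \<bullet> h \<le> Du i * (norm h)\<^sup>2"
    using D_bounds by blast
  interpret P: sonata_problem m K Oset f gf Hf G mu L E B c c_l ft gft Hft mut Du
    by unfold_locales (fact m_pos K_ne K_convex O_open K_sub_O f_grad f_hess f_convex mu_pos
        F_hess_bounds[unfolded HF_def] G_convex B_pos B_conn c_l_pos c_diag c_edge c_zero c_colstoch
        ft_grad ft_hess ft_grad_consistent mut_pos ft_strongly_convex D_upper[unfolded HF_def])+
  show ?thesis
    apply (intro exI[of _ P.abar] conjI allI impI P.abar_pos P.abar_le1)
    subgoal premises run for alpha x xhalf xhat y phi i
    proof -
      interpret S: sonata_step m K Oset f gf Hf G mu L E B c c_l ft gft Hft mut Du alpha x xhalf xhat y phi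
        using run P.abar_le1 by unfold_locales auto
      show ?thesis
        using S.R_linear_convergence[OF \<open>i < m\<close>] unfolding U_def Ustar_def S.Ustar_def P.U_def[abs_def] .
    qed
    done
qed

end
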